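(* Let $\{X_k\},\{V_k\},\{\mu_k\}$ be generated by the SMPG algorithm with $\bar\mu=0$, and let $\mathbb{K}=\{k\in\mathbb{N}:\|V_k\|_{\mathrm F}\le\mu_k^2\}$. There is a constant $C>0$ depending only on the problem data and on $\mu_0,\theta,\beta$ and the retraction (not on $\epsilon$) such that for every $\epsilon\in(0,1)$ with $\mu_0\ge\epsilon$ there exists an index $k\in\mathbb{K}$ with $k\le C\epsilon^{-3}$ and $\mu_k\le\epsilon$; for any such $k$, $\|V_k\|_{\mathrm F}\le\epsilon^2$ and $X_k$ is an $\epsilon$-approximate stationary point of $\min_{X\in\mathcal{O}^{d,r}}f(X)$, certified by $V=V_k$ and $\mu=\mu_k$.
   Context: Setting. $1\le r<d$, $\mathcal{O}^{d,r}=\{X\in\mathbb{R}^{d\times r}:X^\top X=I_r\}$, $\mathcal{T}_X\mathcal{O}^{d,r}=\{D:X^\top D+D^\top X=0\}$, $\mathrm{Proj}_{\mathcal{T}_X}(V)=V-X(X^\top V+V^\top X)/2$, and $\mathrm{grad}\,F(X)=\mathrm{Proj}_{\mathcal{T}_X}(\nabla F(X))$ for smooth $F$. Problem: $f(X)=u(X)+s(X)+w(X)$, where $u:\mathbb{R}^{d\times r}\to\mathbb{R}$ is continuously differentiable with $L_u$-Lipschitz gradient; $s:\mathbb{R}^{d\times r}\to\mathbb{R}$ is convex and $L_s$-Lipschitz (with convex subdifferential $\partial s$); $w(X)=2\rho\|(I_d-XX^\top)\Sigma_\circ^{1/2}\|_{\mathrm F}$ with $\Sigma_\circ\in\mathbb{S}_+^d$,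 $\rho>0$. Smoothing: $\tilde w(X,\mu)=w(X)$ if $w(X)\ge\mu\rho$, $\tilde w(X,\mu)=\frac{w(X)^2}{2\mu\rho}+\frac{\mu\rho}{2}$ otherwise; $\tilde g(X,\mu)=u(X)+\tilde w(X,\mu)$, $\tilde f(X,\mu)=\tilde g(X,\mu)+s(X)$; $\nabla$ is the Euclidean gradient in $X$ and $\mathrm{grad}\,\tilde w(X,\mu)$ the Riemannian gradient of $\tilde w(\cdot,\mu)$. A point $X\in\mathcal{O}^{d,r}$ is an $\epsilon$-approximate stationary point if there exist $V\in\mathcal{T}_X\mathcal{O}^{d,r}$ with $\|V\|_{\mathrm F}\le\epsilon$ and $\mu\in(0,\epsilon]$ such that $\mathrm{dist}\big(0,\mathrm{grad}\,u(X)+\mathrm{grad}\,\tilde w(X,\mu)+\mathrm{Proj}_{\mathcal{T}_X}(\partial s(X+V))\big)\le\epsilon$. A retraction is a smooth map $\mathfrak{R}$ on the tangent bundle of $\mathcal{O}^{d,r}$ with $\mathfrak{R}_X(0)=X$ and $\mathrm{D}\mathfrak{R}_X(0)=\mathrm{id}$. SMPG algorithm: inputs $X_0\in\mathcal{O}^{d,r}$, $\mu_0>0$, $\bar\mu\in[0,\mu_0]$, $\theta\in(0,1)$, $\beta\in(0,1)$. For $k=0,1,\dots$: compute $V_k=\arg\min_{V\in\mathcal{T}_{X_k}\mathcal{O}^{d,r}}\langle\nabla\tilde g(X_k,\mu_k),V\rangle+\frac{1}{2\mu_k}\|V\|_{\mathrm F}^2+s(X_k+V)$; if $\|V_k\|_{\mathrm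 F}\le\bar\mu^2$ and $\mu_k\le\bar\mu$, stop and return $X_k$; otherwise set $\alpha_k=\beta^{m_k}$ with $m_k$ the smallest nonnegative integer such that $\tilde f(\mathfrak{R}_{X_k}(\beta^{m_k}V_k),\mu_k)\le\tilde f(X_k,\mu_k)-\frac{\beta^{m_k}}{2\mu_k}\|V_k\|_{\mathrm F}^2$, set $X_{k+1}=\mathfrak{R}_{X_k}(\alpha_kV_k)$, and set $\mu_{k+1}=\mu_k$ if $\|V_k\|_{\mathrm F}>\mu_k^2$, $\mu_{k+1}=\theta\mu_k$ if $\|V_k\|_{\mathrm F}\le\mu_k^2$. *)

theory Defs
  imports "HOL-Analysis.Analysis"
begin

(* d x r matrices are  real^'r^'d ; the norm / inner product on this type are the
   Frobenius norm / Frobenius inner product. *)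

definition stiefel :: "(real^'r^'d) set" where
  "stiefel = {X. transpose X ** X = mat 1}"

definition tangent :: "real^'r^'d \<Rightarrow> (real^'r^'d) set" where
  "tangent X = {D. transpose X ** D + transpose D ** X = 0}"

definition proj_tan :: "real^'r^'d \<Rightarrow> real^'r^'d \<Rightarrow> real^'r^'d" where
  "proj_tan X V = V - (1/2) *\<^sub>R (X ** (transpose X ** V + transpose V ** X))"

definition egrad :: "('a::real_inner \<Rightarrow> real) \<Rightarrow> 'a \<Rightarrow> 'a" where
  "egrad F X = (THE G. (F has_derivative (\<lambda>H. G \<bullet> H)) (at X))"

definition rgrad :: "(real^'r^'d \<Rightarrow> real) \<Rightarrow> real^'r^'d \<Rightarrow> real^'r^'d" where
  "rgrad F X = proj_tan X (egrad F X)"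

definition subdiff :: "('a::real_inner \<Rightarrow> real) \<Rightarrow> 'a \<Rightarrow> 'a set" where
  "subdiff s X = {G. \<forall>Y. s X + G \<bullet> (Y - X) \<le> s Y}"

(* smooth (C^infinity) on an open set U: there are iterated Frechet derivatives
   D n x [h1,...,hn] = D^n f(x)[h1,...,hn] of every order, with D 0 x [] = f x and
   D (n+1) x (h # hs) the derivative in direction h of y |-> D n y hs *)
definition smooth_on :: "('a::real_normed_vector \<Rightarrow> 'b::real_normed_vector) \<Rightarrow> 'a set \<Rightarrow> bool" where
  "smooth_on f U \<longleftrightarrow> (\<exists>D :: nat \<Rightarrow> 'a \<Rightarrow> 'a list \<Rightarrow> 'b.
      (\<forall>x\<in>U. D 0 x [] = f x) \<and>
      (\<forall>n hs. length hs = n \<longrightarrow>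
         continuous_on U (\<lambda>y. D n y hs) \<and>
         (\<forall>x\<in>U. ((\<lambda>y. D n y hs) has_derivative (\<lambda>h. D (Suc n) x (h # hs))) (at x))))"

(* retraction: smooth map on the tangent bundle (i.e. restriction of a smooth map on an
   open neighbourhood of the tangent bundle), mapping into the Stiefel manifold,
   with R_X(0) = X and DR_X(0) = id *)
definition retraction :: "(real^'r^'d \<Rightarrow> real^'r^'d \<Rightarrow> real^'r^'d) \<Rightarrow> bool" where
  "retraction Ret \<longleftrightarrow>
     (\<exists>U. open U \<and> {(X, D). X \<in> stiefel \<and> D \<in> tangent X} \<subseteq> U \<and>
          smooth_on (\<lambda>p. Ret (fst p) (snd p)) U) \<and>
     (\<forall>X\<in>stiefel. \<forall>D\<in>tangent X. Ret X D \<in> stiefel) \<and>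
     (\<forall>X\<in>stiefel. Ret X 0 = X) \<and>
     (\<forall>X\<in>stiefel. \<forall>D\<in>tangent X. ((\<lambda>t. Ret X (t *\<^sub>R D)) has_vector_derivative D) (at 0))"

(* w(X) = 2 rho || (I - X X^T) Sigma^{1/2} ||_F ; Sh stands for Sigma^{1/2} *)
definition wfun :: "real \<Rightarrow> real^'d^'d \<Rightarrow> real^'r^'d \<Rightarrow> real" where
  "wfun \<rho> Sh X = 2 * \<rho> * norm ((mat 1 - X ** transpose X) ** Sh)"

definition wsm :: "real \<Rightarrow> real^'d^'d \<Rightarrow> real^'r^'d \<Rightarrow> real \<Rightarrow> real" where
  "wsm \<rho> Sh X \<mu> = (if wfun \<rho> Sh X \<ge> \<mu> * \<rho> then wfun \<rho> Sh X
                    else (wfun \<rho> Sh X)\<^sup>2 / (2 * \<mu> * \<rho>) + \<mu> * \<rho> / 2)"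

definition gsm :: "(real^'r^'d \<Rightarrow> real) \<Rightarrow> real \<Rightarrow> real^'d^'d \<Rightarrow> real^'r^'d \<Rightarrow> real \<Rightarrow> real" where
  "gsm u \<rho> Sh X \<mu> = u X + wsm \<rho> Sh X \<mu>"

definition fsm :: "(real^'r^'d \<Rightarrow> real) \<Rightarrow> (real^'r^'d \<Rightarrow> real) \<Rightarrow> real \<Rightarrow> real^'d^'d \<Rightarrow> real^'r^'d \<Rightarrow> real \<Rightarrow> real" where
  "fsm u s \<rho> Sh X \<mu> = gsm u \<rho> Sh X \<mu> + s X"

definition eps_stat_cert ::
  "(real^'r^'d \<Rightarrow> real) \<Rightarrow> (real^'r^'d \<Rightarrow> real) \<Rightarrow> real \<Rightarrow> real^'d^'d \<Rightarrow> real \<Rightarrow> real^'r^'d \<Rightarrow> real^'r^'d \<Rightarrow> real \<Rightarrow> bool" where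
  "eps_stat_cert u s \<rho> Sh \<epsilon> X V \<mu> \<longleftrightarrow>
     V \<in> tangent X \<and> norm V \<le> \<epsilon> \<and> 0 < \<mu> \<and> \<mu> \<le> \<epsilon> \<and>
     infdist 0 {rgrad u X + rgrad (\<lambda>Y. wsm \<rho> Sh Y \<mu>) X + proj_tan X G | G. G \<in> subdiff s (X + V)} \<le> \<epsilon>"

definition eps_stationary ::
  "(real^'r^'d \<Rightarrow> real) \<Rightarrow> (real^'r^'d \<Rightarrow> real) \<Rightarrow> real \<Rightarrow> real^'d^'d \<Rightarrow> real \<Rightarrow> real^'r^'d \<Rightarrow> bool" where
  "eps_stationary u s \<rho> Sh \<epsilon> X \<longleftrightarrow> X \<in> stiefel \<and> (\<exists>V \<mu>. eps_stat_cert u s \<rho> Sh \<epsilon> X V \<mu>)"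

(* the SMPG iterates with mu_bar = 0 (the stopping test never fires since mu_k > 0) *)
definition smpg_run ::
  "(real^'r^'d \<Rightarrow> real) \<Rightarrow> (real^'r^'d \<Rightarrow> real) \<Rightarrow> real \<Rightarrow> real^'d^'d \<Rightarrow>
   (real^'r^'d \<Rightarrow> real^'r^'d \<Rightarrow> real^'r^'d) \<Rightarrow> real \<Rightarrow> real \<Rightarrow> real \<Rightarrow>
   (nat \<Rightarrow> real^'r^'d) \<Rightarrow> (nat \<Rightarrow> real^'r^'d) \<Rightarrow> (nat \<Rightarrow> real) \<Rightarrow> (nat \<Rightarrow> real) \<Rightarrow> bool" where
  "smpg_run u s \<rho> Sh Ret \<mu>0 \<theta> \<beta> X V \<mu> \<alpha> \<longleftrightarrow>
     X 0 \<in> stiefel \<and> \<mu> 0 = \<mu>0 \<and>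
     (\<forall>k.
        V k \<in> tangent (X k) \<and>
        (\<forall>W\<in>tangent (X k).
           egrad (\<lambda>Y. gsm u \<rho> Sh Y (\<mu> k)) (X k) \<bullet> V k + (norm (V k))\<^sup>2 / (2 * \<mu> k) + s (X k + V k)
           \<le> egrad (\<lambda>Y. gsm u \<rho> Sh Y (\<mu> k)) (X k) \<bullet> W + (norm W)\<^sup>2 / (2 * \<mu> k) + s (X k + W)) \<and>
        (\<exists>m::nat. \<alpha> k = \<beta> ^ m \<and>
           fsm u s \<rho> Sh (Ret (X k) (\<beta> ^ m *\<^sub>R V k)) (\<mu> k)
             \<le> fsm u s \<rho> Sh (X k) (\<mu> k) - \<beta> ^ m / (2 * \<mu> k) * (norm (V k))\<^sup>2 \<and>
           (\<forall>m'<m. \<not> (fsm u s \<rho> Sh (Ret (X k) (\<beta> ^ m' *\<^sub>R V k)) (\<mu> k)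
             \<le> fsm u s \<rho> Sh (X k) (\<mu> k) - \<beta> ^ m' / (2 * \<mu> k) * (norm (V k))\<^sup>2))) \<and>
        X (Suc k) = Ret (X k) (\<alpha> k *\<^sub>R V k) \<and>
        \<mu> (Suc k) = (if norm (V k) > (\<mu> k)\<^sup>2 then \<mu> k else \<theta> * \<mu> k))"

end

theory Submission
  imports Defs
begin

text \<open>
  The smoothed penalty is a Huber function, \<open>wsm \<rho> Sh X \<mu> = 2 * \<rho> * huber (\<mu> / 2) (resid Sh X)\<close>,
  so on the compact Stiefel manifold the smooth part \<open>gsm\<close> has a quadratic upper bound with curvature
  \<open>curv0 + curv1 / \<mu>\<close>.  Combined with a second-order bound on the retraction (from smoothness on
  a compact piece of the tangent bundle) and the optimality of the proximal step \<open>V\<close>, this shows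
  that the Armijo backtracking accepts every step size below a constant \<open>armijo_step\<close> that does
  not depend on \<open>\<mu> \<le> \<mu>0\<close>.  Hence each iteration with \<open>norm V > \<mu>\<^sup>2\<close> decreases the merit
  \<open>fsm\<close>, which is bounded and monotone in \<open>\<mu>\<close>, by a multiple of \<open>\<mu>\<^sup>3\<close>.  While
  \<open>\<mu> \<ge> \<theta> \<epsilon>\<close> there are therefore \<open>O(\<epsilon>\<^sup>-\<^sup>3)\<close> such iterations and \<open>O(1/\<epsilon>)\<close> iterations
  that shrink \<open>\<mu>\<close>, so within \<open>O(\<epsilon>\<^sup>-\<^sup>3)\<close> steps some iteration has \<open>norm V \<le> \<mu>\<^sup>2\<close> and
  \<open>\<mu> \<le> \<epsilon>\<close>.  There the optimality conditions of the proximal subproblem, obtained by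
  separating an epigraph from the tangent space, certify stationarity with residual
  \<open>norm V / \<mu> \<le> \<mu>\<close>.
\<close>

section \<open>Frobenius geometry of matrices\<close>

lemma inner_matrix_sum: "(A::real^'n^'m) \<bullet> B = (\<Sum>i\<in>UNIV. \<Sum>j\<in>UNIV. A$i$j * B$i$j)"
  by (simp add: inner_vec_def)

lemma inner_transpose: "transpose (A::real^'n^'m) \<bullet> transpose B = A \<bullet> B"
proof -
  have "transpose A \<bullet> transpose B = (\<Sum>j\<in>UNIV. \<Sum>i\<in>UNIV. A$i$j * B$i$j)"
    by (simp add: inner_matrix_sum transpose_def)
  also have "\<dots> = A \<bullet> B"
    by (simp add: inner_matrix_sum, rule sum.swap)
  finally show ?thesis .
qed

lemma norm_transpose: "norm (transpose (A::real^'n^'m)) = norm A"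
  by (simp add: norm_eq_sqrt_inner inner_transpose)

lemma inner_matrix_mult_left:
  "((A::real^'n^'m) ** (B::real^'p^'n)) \<bullet> C = B \<bullet> (transpose A ** C)"
proof -
  have "(A ** B) \<bullet> C = (\<Sum>i\<in>UNIV. \<Sum>k\<in>UNIV. \<Sum>j\<in>UNIV. A$i$j * B$j$k * C$i$k)"
    by (simp add: inner_matrix_sum matrix_matrix_mult_def sum_distrib_right)
  also have "\<dots> = (\<Sum>j\<in>UNIV. \<Sum>k\<in>UNIV. \<Sum>i\<in>UNIV. A$i$j * B$j$k * C$i$k)"
  proof -
    have "(\<Sum>i\<in>UNIV. \<Sum>k\<in>UNIV. \<Sum>j\<in>UNIV. A$i$j * B$j$k * C$i$k)
        = (\<Sum>i\<in>UNIV. \<Sum>j\<in>UNIV. \<Sum>k\<in>UNIV. A$i$j * B$j$k * C$i$k)"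
      by (intro sum.cong refl sum.swap)
    also have "\<dots> = (\<Sum>j\<in>UNIV. \<Sum>i\<in>UNIV. \<Sum>k\<in>UNIV. A$i$j * B$j$k * C$i$k)"
      by (rule sum.swap)
    also have "\<dots> = (\<Sum>j\<in>UNIV. \<Sum>k\<in>UNIV. \<Sum>i\<in>UNIV. A$i$j * B$j$k * C$i$k)"
      by (intro sum.cong refl sum.swap)
    finally show ?thesis .
  qed
  also have "\<dots> = B \<bullet> (transpose A ** C)"
    by (simp add: inner_matrix_sum matrix_matrix_mult_def transpose_def sum_distrib_left
        mult.assoc mult.left_commute)
  finally show ?thesis .
qed

lemma norm_matrix_mult_le: "norm ((A::real^'n^'m) ** (B::real^'p^'n)) \<le> norm A * norm B"
proof -
  have entry: "(A ** B)$i$k = (A$i) \<bullet> (transpose B $ k)" for i k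
    by (simp add: matrix_matrix_mult_def transpose_def inner_vec_def mult.commute)
  have "(norm (A ** B))\<^sup>2 = (\<Sum>i\<in>UNIV. \<Sum>k\<in>UNIV. ((A$i) \<bullet> (transpose B $ k))\<^sup>2)"
    unfolding power2_norm_eq_inner inner_matrix_sum entry[symmetric] by (simp add: power2_eq_square)
  also have "\<dots> \<le> (\<Sum>i\<in>UNIV. \<Sum>k\<in>UNIV. (norm (A$i))\<^sup>2 * (norm (transpose B $ k))\<^sup>2)"
  proof (intro sum_mono)
    fix i k
    have "\<bar>(A$i) \<bullet> (transpose B $ k)\<bar>\<^sup>2 \<le> (norm (A$i) * norm (transpose B $ k))\<^sup>2"
      by (intro power_mono Cauchy_Schwarz_ineq2) auto
    then show "((A$i) \<bullet> (transpose B $ k))\<^sup>2 \<le> (norm (A$i))\<^sup>2 * (norm (transpose B $ k))\<^sup>2"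
      by (simp add: power_mult_distrib)
  qed
  also have "\<dots> = (norm A * norm B)\<^sup>2"
    by (simp add: power2_norm_eq_inner inner_vec_def sum_product norm_transpose[of B, symmetric]
        power_mult_distrib)
  finally show ?thesis
    by (rule power2_le_imp_le) simp
qed

lemma bounded_bilinear_matrix_mult:
  "bounded_bilinear ((**) :: real^'n^'m \<Rightarrow> real^'p^'n \<Rightarrow> real^'p^'m)"
proof
  fix a a' :: "real^'n^'m" and b b' :: "real^'p^'n" and r :: real
  show "(a + a') ** b = a ** b + a' ** b"
    by (vector matrix_matrix_mult_def sum.distrib[symmetric] field_simps)
  show "a ** (b + b') = a ** b + a ** b'"
    by (rule matrix_add_ldistrib)
  show "(r *\<^sub>R a) ** b = r *\<^sub>R (a ** b)"
    by (simp add: scalar_matrix_assoc)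
  show "a ** (r *\<^sub>R b) = r *\<^sub>R (a ** b)"
    by (simp add: matrix_scalar_ac scalar_matrix_assoc)
next
  show "\<exists>K. \<forall>a b. norm ((a::real^'n^'m) ** (b::real^'p^'n)) \<le> norm a * norm b * K"
    by (intro exI[of _ 1]) (simp add: norm_matrix_mult_le)
qed

lemma bounded_linear_transpose: "bounded_linear (transpose :: real^'n^'m \<Rightarrow> real^'m^'n)"
proof
  fix a b :: "real^'n^'m" and r :: real
  show "transpose (a + b) = transpose a + transpose b"
    by (vector transpose_def)
  show "transpose (r *\<^sub>R a) = r *\<^sub>R transpose a"
    by (rule transpose_scalar)
  show "\<exists>K. \<forall>x::real^'n^'m. norm (transpose x) \<le> norm x * K"
    by (intro exI[of _ 1]) (simp add: norm_transpose)
qed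

lemmas matrix_mult_simps =
  bounded_bilinear.diff_left[OF bounded_bilinear_matrix_mult]
  bounded_bilinear.diff_right[OF bounded_bilinear_matrix_mult]
  bounded_bilinear.add_left[OF bounded_bilinear_matrix_mult]
  bounded_bilinear.add_right[OF bounded_bilinear_matrix_mult]
  bounded_bilinear.scaleR_left[OF bounded_bilinear_matrix_mult]
  bounded_bilinear.scaleR_right[OF bounded_bilinear_matrix_mult]
  bounded_bilinear.minus_left[OF bounded_bilinear_matrix_mult]
  bounded_bilinear.minus_right[OF bounded_bilinear_matrix_mult]

lemmas transpose_simps =
  linear_add[OF bounded_linear.linear[OF bounded_linear_transpose]]
  linear_diff[OF bounded_linear.linear[OF bounded_linear_transpose]]
  linear_neg[OF bounded_linear.linear[OF bounded_linear_transpose]]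
  linear_0[OF bounded_linear.linear[OF bounded_linear_transpose]]
  transpose_scalar

section \<open>The Stiefel manifold and its tangent spaces\<close>

lemma norm_stiefel:
  assumes "X \<in> stiefel"
  shows "norm (X::real^'r^'d) = sqrt (real CARD('r))"
proof -
  have "(norm X)\<^sup>2 = (X ** mat 1) \<bullet> X"
    by (simp add: power2_norm_eq_inner)
  also have "\<dots> = mat 1 \<bullet> (transpose X ** X)"
    by (rule inner_matrix_mult_left)
  also have "\<dots> = mat 1 \<bullet> (mat 1 :: real^'r^'r)"
    using assms by (simp add: stiefel_def)
  also have "\<dots> = real CARD('r)"
    by (simp add: inner_matrix_sum mat_def if_distrib if_distribR cong: if_cong)
  finally show ?thesis
    by (metis norm_ge_zero real_sqrt_unique)
qed

lemma subspace_tangent: "subspace (tangent X)"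
proof (unfold subspace_def, intro conjI ballI allI)
  show "0 \<in> tangent X"
    by (simp add: tangent_def transpose_simps)
next
  fix V W assume "V \<in> tangent X" "W \<in> tangent X"
  then show "V + W \<in> tangent X"
    by (simp add: tangent_def matrix_mult_simps transpose_simps algebra_simps)
next
  fix c and V assume "V \<in> tangent X"
  then have "c *\<^sub>R (transpose X ** V + transpose V ** X) = 0"
    by (simp add: tangent_def)
  then show "c *\<^sub>R V \<in> tangent X"
    by (simp add: tangent_def matrix_mult_simps transpose_simps scaleR_add_right)
qed

lemma linear_proj_tan: "linear (proj_tan X)"
  unfolding proj_tan_def
  by (rule linearI) (simp_all add: matrix_mult_simps transpose_simps algebra_simps)

lemma proj_tan_tangent: "V \<in> tangent X \<Longrightarrow> proj_tan X V = V"
  by (simp add: tangent_def proj_tan_def)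

lemma proj_tan_in_tangent:
  assumes "X \<in> stiefel"
  shows "proj_tan X V \<in> tangent X"
proof -
  define B where "B = transpose X ** V + transpose V ** X"
  have XX: "transpose X ** X = mat 1"
    using assms by (simp add: stiefel_def)
  have B: "transpose B = B"
    by (simp add: B_def transpose_simps matrix_transpose_mul)
  have P: "proj_tan X V = V - (1/2) *\<^sub>R (X ** B)"
    by (simp add: proj_tan_def B_def)
  have left: "transpose X ** proj_tan X V = transpose X ** V - (1/2) *\<^sub>R B"
    by (simp add: P matrix_mult_simps matrix_mul_assoc XX)
  have right: "transpose (proj_tan X V) ** X = transpose V ** X - (1/2) *\<^sub>R B"
    by (simp add: P matrix_mult_simps transpose_simps matrix_transpose_mul B
        matrix_mul_assoc[symmetric] XX)
  have "(1/2) *\<^sub>R B + (1/2) *\<^sub>R B = B"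
    by (simp add: scaleR_left_distrib[symmetric])
  then have "transpose X ** proj_tan X V + transpose (proj_tan X V) ** X = B - B"
    unfolding left right by (metis B_def add_diff_add)
  then show ?thesis
    by (simp add: tangent_def)
qed

lemma inner_normal_tangent:
  assumes "W \<in> tangent X" and "transpose B = B"
  shows "(X ** B) \<bullet> W = 0"
proof -
  have "2 * ((X ** B) \<bullet> W) = B \<bullet> (transpose X ** W) + B \<bullet> (transpose W ** X)"
    using inner_transpose[of B "transpose X ** W"] assms(2)
    by (simp add: inner_matrix_mult_left matrix_transpose_mul)
  also have "\<dots> = 0"
    using assms(1) by (simp add: tangent_def inner_add_right[symmetric])
  finally show ?thesis by simp
qed

lemma proj_tan_eq_0:
  assumes X: "X \<in> stiefel" and G: "\<forall>W\<in>tangent X. G \<bullet> W = 0"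
  shows "proj_tan X G = 0"
proof -
  define B where "B = transpose X ** G + transpose G ** X"
  have B: "transpose B = B"
    by (simp add: B_def transpose_simps matrix_transpose_mul)
  have T: "proj_tan X G \<in> tangent X"
    by (rule proj_tan_in_tangent[OF X])
  have "proj_tan X G \<bullet> proj_tan X G = G \<bullet> proj_tan X G - (1/2) * ((X ** B) \<bullet> proj_tan X G)"
    by (subst (1) proj_tan_def) (simp add: B_def inner_diff_left)
  also have "\<dots> = 0"
    using G T inner_normal_tangent[OF T B] by simp
  finally show ?thesis by simp
qed

lemma egrad_eqI:
  assumes "(F has_derivative (\<lambda>H. G \<bullet> H)) (at X)"
  shows "egrad F X = G"
  unfolding egrad_def
proof (rule the_equality)
  fix G' assume "(F has_derivative (\<lambda>H. G' \<bullet> H)) (at X)"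
  with assms have "(\<lambda>H. G \<bullet> H) = (\<lambda>H. G' \<bullet> H)"
    by (rule has_derivative_unique)
  then have "(G - G') \<bullet> (G - G') = 0"
    by (simp add: inner_diff_left fun_eq_iff)
  then show "G' = G"
    by simp
qed (rule assms)

lemma has_derivative_eq_inner_egrad:
  fixes F :: "'a::euclidean_space \<Rightarrow> real"
  assumes "(F has_derivative L) (at X)"
  shows "L = (\<lambda>H. egrad F X \<bullet> H)"
proof -
  have "linear L"
    using assms has_derivative_linear by blast
  then have "L = (\<lambda>H. adjoint L 1 \<bullet> H)"
    by (simp add: adjoint_works inner_commute)
  with assms show ?thesis
    by (metis egrad_eqI)
qed

lemma differentiable_has_derivative_egrad:
  fixes F :: "'a::euclidean_space \<Rightarrow> real"
  assumes "F differentiable (at X)"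
  shows "(F has_derivative (\<lambda>H. egrad F X \<bullet> H)) (at X)"
  using assms has_derivative_eq_inner_egrad unfolding differentiable_def by metis

lemma has_derivative_quadratic_remainderI:
  assumes "bounded_linear L"
    and "\<And>y. norm (f y - f x - L (y - x)) \<le> K * (norm (y - x))\<^sup>2"
  shows "(f has_derivative L) (at x)"
  unfolding has_derivative_iff_norm
proof (intro conjI assms(1))
  show "((\<lambda>y. norm (f y - f x - L (y - x)) / norm (y - x)) \<longlongrightarrow> 0) (at x)"
  proof (rule Lim_null_comparison)
    show "\<forall>\<^sub>F y in at x. norm (norm (f y - f x - L (y - x)) / norm (y - x)) \<le> \<bar>K\<bar> * norm (y - x)"
    proof (rule always_eventually, rule allI)
      fix y
      have "norm (f y - f x - L (y - x)) \<le> \<bar>K\<bar> * norm (y - x) * norm (y - x)"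
        using assms(2)[of y] abs_ge_self[of K]
        by (smt (verit) mult_right_mono power2_eq_square mult.assoc zero_le_power2)
      then show "norm (norm (f y - f x - L (y - x)) / norm (y - x)) \<le> \<bar>K\<bar> * norm (y - x)"
        by (cases "y = x") (simp_all add: divide_le_eq)
    qed
    show "((\<lambda>y. \<bar>K\<bar> * norm (y - x)) \<longlongrightarrow> 0) (at x)"
      by (auto intro!: tendsto_eq_intros)
  qed
qed

lemma lipschitz_egrad_remainder:
  fixes u :: "'a::euclidean_space \<Rightarrow> real"
  assumes diff: "\<forall>X. u differentiable (at X)" and lip: "L-lipschitz_on UNIV (egrad u)"
  shows "\<bar>u Y - u X - egrad u X \<bullet> (Y - X)\<bar> \<le> L * (norm (Y - X))\<^sup>2"
proof -
  define E where "E = Y - X"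
  define \<phi> where "\<phi> t = u (X + t *\<^sub>R E) - t * (egrad u X \<bullet> E)" for t
  have "L \<ge> 0"
    using lip lipschitz_on_nonneg by blast
  have deriv: "(\<phi> has_derivative (\<lambda>h. h * ((egrad u (X + t *\<^sub>R E) - egrad u X) \<bullet> E)))
      (at t within {0..1})" for t
  proof -
    have "((\<lambda>t. X + t *\<^sub>R E) has_derivative (\<lambda>h. h *\<^sub>R E)) (at t within {0..1})"
      by (auto intro!: derivative_eq_intros)
    from has_derivative_compose[OF this differentiable_has_derivative_egrad] diff
    have "((\<lambda>t. u (X + t *\<^sub>R E)) has_derivative (\<lambda>h. egrad u (X + t *\<^sub>R E) \<bullet> (h *\<^sub>R E)))
        (at t within {0..1})"
      by blast
    then show ?thesis
      unfolding \<phi>_def[abs_def]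
      by (auto intro!: derivative_eq_intros simp: inner_diff_left algebra_simps)
  qed
  then obtain \<xi> where \<xi>: "\<xi> \<in> {0..1}"
    and "\<phi> 1 - \<phi> 0 = (egrad u (X + \<xi> *\<^sub>R E) - egrad u X) \<bullet> E"
    using mvt_very_simple[of 0 1 \<phi>, OF _ deriv] by auto
  then have "\<bar>u Y - u X - egrad u X \<bullet> E\<bar> = \<bar>(egrad u (X + \<xi> *\<^sub>R E) - egrad u X) \<bullet> E\<bar>"
    by (simp add: \<phi>_def E_def)
  also have "\<dots> \<le> norm (egrad u (X + \<xi> *\<^sub>R E) - egrad u X) * norm E"
    by (rule Cauchy_Schwarz_ineq2)
  also have "\<dots> \<le> (L * norm (\<xi> *\<^sub>R E)) * norm E"
    using lipschitz_onD[OF lip, of "X + \<xi> *\<^sub>R E" X] by (intro mult_right_mono) (auto simp: dist_norm)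
  also have "\<dots> \<le> L * norm E * norm E"
    using \<xi> \<open>L \<ge> 0\<close> by (intro mult_right_mono mult_left_mono) (auto simp: mult_left_le_one_le)
  finally show ?thesis
    by (simp add: E_def power2_eq_square)
qed

lemma norm_egrad_le:
  assumes "L-lipschitz_on UNIV (egrad u)"
  shows "norm (egrad u X) \<le> norm (egrad u 0) + L * norm X"
  using lipschitz_onD[OF assms, of X 0] norm_triangle_ineq2[of "egrad u X" "egrad u 0"]
  by (simp add: dist_norm)

section \<open>The Huber function\<close>

definition huber :: "real \<Rightarrow> 'a::real_normed_vector \<Rightarrow> real" where
  "huber r M = (if norm M \<ge> r then norm M else (norm M)\<^sup>2 / (2 * r) + r / 2)"

definition huber_grad :: "real \<Rightarrow> 'a::real_normed_vector \<Rightarrow> 'a" where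
  "huber_grad r M = (1 / max (norm M) r) *\<^sub>R M"

lemma huber_nonneg: "r > 0 \<Longrightarrow> huber r M \<ge> 0"
  by (auto simp: huber_def)

lemma norm_huber_grad_le: "r > 0 \<Longrightarrow> norm (huber_grad r M) \<le> 1"
  by (auto simp: huber_grad_def max_def divide_le_eq)

text \<open>\<open>huber r N\<close> is the maximum of \<open>Z \<bullet> N - r / 2 * (norm Z)\<^sup>2 + r / 2\<close> over the unit ball,
  attained at \<open>Z = huber_grad r N\<close>.\<close>

lemma inner_le_huber:
  fixes Z N :: "'a::real_inner"
  assumes r: "r > 0" and Z: "norm Z \<le> 1"
  shows "Z \<bullet> N - r / 2 * (norm Z)\<^sup>2 + r / 2 \<le> huber r N"
proof -
  define t where "t = norm Z"
  define n where "n = norm N"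
  have t: "0 \<le> t" "t \<le> 1"
    using Z by (auto simp: t_def)
  have "Z \<bullet> N \<le> t * n"
    unfolding t_def n_def by (rule norm_cauchy_schwarz)
  moreover have "t * n - r / 2 * t\<^sup>2 + r / 2 \<le> huber r N"
  proof (cases "n \<ge> r")
    case True
    have "t * n - r / 2 * t\<^sup>2 + r / 2 - n = - ((1 - t) * (n - r) + r * (1 - t)\<^sup>2 / 2)"
      by (simp add: power2_eq_square field_simps)
    moreover have "(1 - t) * (n - r) \<ge> 0" "r * (1 - t)\<^sup>2 / 2 \<ge> 0"
      using t True r by simp_all
    ultimately show ?thesis
      using True by (simp add: huber_def n_def)
  next
    case False
    have "n\<^sup>2 / (2 * r) - (t * n - r / 2 * t\<^sup>2) = (r * t - n)\<^sup>2 / (2 * r)"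
      using r by (simp add: field_simps power2_eq_square)
    moreover have "(r * t - n)\<^sup>2 / (2 * r) \<ge> 0"
      using r by simp
    ultimately show ?thesis
      using False by (simp add: huber_def n_def)
  qed
  ultimately show ?thesis
    by (simp add: t_def)
qed

lemma huber_eq_inner:
  fixes M :: "'a::real_inner"
  assumes r: "r > 0"
  shows "huber r M = huber_grad r M \<bullet> M - r / 2 * (norm (huber_grad r M))\<^sup>2 + r / 2"
proof (cases "norm M \<ge> r")
  case True
  then have "huber_grad r M = (1 / norm M) *\<^sub>R M" and "M \<noteq> 0"
    using r by (auto simp: huber_grad_def max_def)
  with True show ?thesis
    by (simp add: huber_def power2_norm_eq_inner[symmetric]) (simp add: power2_eq_square)
next
  case False
  then have "huber_grad r M = (1 / r) *\<^sub>R M"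
    by (simp add: huber_grad_def max_def)
  with False r show ?thesis
    by (simp add: huber_def power2_norm_eq_inner[symmetric] power_divide field_simps
        power2_eq_square)
qed

lemma huber_subgradient:
  fixes M N :: "'a::real_inner"
  assumes "r > 0"
  shows "huber r M + huber_grad r M \<bullet> (N - M) \<le> huber r N"
  using inner_le_huber[OF assms norm_huber_grad_le[OF assms], of M N] huber_eq_inner[OF assms, of M]
  by (simp add: inner_diff_right)

lemma huber_grad_eq_closest_point:
  fixes M :: "'a::euclidean_space"
  assumes r: "r > 0"
  shows "huber_grad r M = (1 / r) *\<^sub>R closest_point (cball 0 r) M"
proof -
  define x where "x = (r / max (norm M) r) *\<^sub>R M"
  have x: "x \<in> cball 0 r"
    using r by (auto simp: x_def max_def divide_le_eq)
  have "dist M x \<le> dist M z" if z: "z \<in> cball 0 r" for z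
  proof (cases "norm M \<le> r")
    case True
    then show ?thesis
      using r by (simp add: x_def max_def)
  next
    case False
    then have M: "norm M > 0"
      using r by linarith
    with False have "x = (r / norm M) *\<^sub>R M" "1 - r / norm M \<ge> 0"
      by (simp_all add: x_def max_def field_simps)
    then have "dist M x = norm ((1 - r / norm M) *\<^sub>R M)"
      by (simp add: dist_norm algebra_simps)
    also have "\<dots> = (1 - r / norm M) * norm M"
      using \<open>1 - r / norm M \<ge> 0\<close> by simp
    also have "\<dots> = norm M - r"
      using M by (simp add: field_simps)
    also have "\<dots> \<le> dist M z"
      using z norm_triangle_ineq2[of M z] by (simp add: dist_norm)
    finally show ?thesis .
  qed
  then have "closest_point (cball 0 r) M = x"
    using x by (intro closest_point_unique[symmetric]) auto
  with r show ?thesis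
    by (simp add: x_def huber_grad_def)
qed

lemma huber_grad_lipschitz:
  fixes M N :: "'a::euclidean_space"
  assumes r: "r > 0"
  shows "norm (huber_grad r N - huber_grad r M) \<le> norm (N - M) / r"
proof -
  have "dist (closest_point (cball 0 r) N) (closest_point (cball 0 r) M) \<le> dist N M"
    by (rule closest_point_lipschitz) (use r in auto)
  with r show ?thesis
    by (simp add: huber_grad_eq_closest_point dist_norm scaleR_diff_right[symmetric]
        divide_right_mono)
qed

lemma huber_le_quadratic:
  fixes M N :: "'a::euclidean_space"
  assumes r: "r > 0"
  shows "huber r N \<le> huber r M + huber_grad r M \<bullet> (N - M) + (norm (N - M))\<^sup>2 / r"
proof -
  have "(huber_grad r N - huber_grad r M) \<bullet> (N - M)
      \<le> norm (huber_grad r N - huber_grad r M) * norm (N - M)"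
    by (rule norm_cauchy_schwarz)
  also have "\<dots> \<le> norm (N - M) / r * norm (N - M)"
    by (rule mult_right_mono[OF huber_grad_lipschitz[OF r]]) simp
  finally show ?thesis
    using huber_subgradient[OF r, of N M]
    by (simp add: inner_diff_left inner_diff_right power2_eq_square)
qed

lemma has_derivative_huber:
  fixes M :: "'a::euclidean_space"
  assumes r: "r > 0"
  shows "(huber r has_derivative (\<lambda>H. huber_grad r M \<bullet> H)) (at M)"
proof (rule has_derivative_quadratic_remainderI[where K = "1/r"])
  fix N
  show "norm (huber r N - huber r M - huber_grad r M \<bullet> (N - M)) \<le> 1 / r * (norm (N - M))\<^sup>2"
    using huber_le_quadratic[OF r, where M = M and N = N] huber_subgradient[OF r, of M N]
    by simp
qed (rule bounded_linear_inner_right)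

lemma huber_mono:
  assumes r': "0 < r'" and rr: "r' \<le> r"
  shows "huber r' M \<le> huber r M"
proof -
  define n where "n = norm M"
  have n: "n \<ge> 0"
    by (simp add: n_def)
  consider "n \<ge> r" | "r' \<le> n" "n < r" | "n < r'"
    by linarith
  then show ?thesis
  proof cases
    case 1
    then show ?thesis
      using rr by (simp add: huber_def n_def[symmetric])
  next
    case 2
    have "n\<^sup>2 / (2 * r) + r / 2 - n = (n - r)\<^sup>2 / (2 * r)"
      using 2 r' by (simp add: field_simps power2_eq_square)
    moreover have "(n - r)\<^sup>2 / (2 * r) \<ge> 0"
      using 2 r' by simp
    ultimately show ?thesis
      using 2 by (simp add: huber_def n_def[symmetric])
  next
    case 3
    have "(n\<^sup>2 / (2 * r) + r / 2) - (n\<^sup>2 / (2 * r') + r' / 2) = (r - r') * (r * r' - n\<^sup>2) / (2 * r * r')"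
      using r' rr by (simp add: field_simps power2_eq_square)
    moreover have "n * n \<le> r * r'"
      using 3 n rr r' by (intro mult_mono) auto
    then have "(r - r') * (r * r' - n\<^sup>2) / (2 * r * r') \<ge> 0"
      using rr r' by (simp add: power2_eq_square)
    ultimately show ?thesis
      using 3 rr by (simp add: huber_def n_def[symmetric])
  qed
qed

section \<open>The smoothed penalty\<close>

definition resid :: "real^'d^'d \<Rightarrow> real^'r^'d \<Rightarrow> real^'d^'d" where
  "resid Sh X = (mat 1 - X ** transpose X) ** Sh"

definition resid_deriv :: "real^'d^'d \<Rightarrow> real^'r^'d \<Rightarrow> real^'r^'d \<Rightarrow> real^'d^'d" where
  "resid_deriv Sh X E = - ((E ** transpose X + X ** transpose E) ** Sh)"

lemma wfun_eq_norm_resid: "wfun \<rho> Sh X = 2 * \<rho> * norm (resid Sh X)"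
  by (simp add: wfun_def resid_def)

lemma wsm_eq_huber:
  assumes \<rho>: "\<rho> > 0" and \<mu>: "\<mu> > 0"
  shows "wsm \<rho> Sh X \<mu> = 2 * \<rho> * huber (\<mu> / 2) (resid Sh X)"
proof -
  define n where "n = norm (resid Sh X)"
  have "2 * \<rho> * n \<ge> \<mu> * \<rho> \<longleftrightarrow> n \<ge> \<mu> / 2"
    using \<rho> by (auto simp: field_simps)
  moreover have "(2 * \<rho> * n)\<^sup>2 / (2 * \<mu> * \<rho>) + \<mu> * \<rho> / 2 = 2 * \<rho> * (n\<^sup>2 / (2 * (\<mu> / 2)) + \<mu> / 2 / 2)"
    using \<rho> \<mu> by (simp add: field_simps power2_eq_square)
  ultimately show ?thesis
    by (simp add: wsm_def huber_def wfun_eq_norm_resid n_def[symmetric])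
qed

lemma has_derivative_resid: "(resid Sh has_derivative resid_deriv Sh X) (at X)"
proof -
  have "((\<lambda>Y. Y ** transpose Y) has_derivative (\<lambda>E. X ** transpose E + E ** transpose X)) (at X)"
    using bounded_bilinear.FDERIV[OF bounded_bilinear_matrix_mult has_derivative_id
        bounded_linear_imp_has_derivative[OF bounded_linear_transpose]]
    by simp
  from bounded_bilinear.FDERIV[OF bounded_bilinear_matrix_mult
      has_derivative_diff[OF has_derivative_const[of "mat 1"] this] has_derivative_const[of Sh]]
  show ?thesis
    unfolding resid_def[abs_def] resid_deriv_def
    by (simp add: matrix_mult_simps add.commute)
qed

lemma has_derivative_wsm:
  assumes "\<rho> > 0" and "\<mu> > 0"
  shows "((\<lambda>Y. wsm \<rho> Sh Y \<mu>) has_derivative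
      (\<lambda>E. 2 * \<rho> * (huber_grad (\<mu> / 2) (resid Sh X) \<bullet> resid_deriv Sh X E))) (at X)"
  using has_derivative_mult_right[OF has_derivative_compose[OF has_derivative_resid
        has_derivative_huber[of "\<mu> / 2"]], of "2 * \<rho>"] assms
  by (simp add: wsm_eq_huber)

lemma egrad_wsm:
  assumes "\<rho> > 0" and "\<mu> > 0"
  shows "((\<lambda>Y. wsm \<rho> Sh Y \<mu>) has_derivative (\<lambda>E. egrad (\<lambda>Y. wsm \<rho> Sh Y \<mu>) X \<bullet> E)) (at X)"
    and "egrad (\<lambda>Y. wsm \<rho> Sh Y \<mu>) X \<bullet> E
      = 2 * \<rho> * (huber_grad (\<mu> / 2) (resid Sh X) \<bullet> resid_deriv Sh X E)"
  using has_derivative_eq_inner_egrad[OF has_derivative_wsm[OF assms]] has_derivative_wsm[OF assms]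
  by (metis, metis)

lemma norm_sum_matrix_mult_transpose_le:
  "norm ((A::real^'r^'d) ** transpose B + (C::real^'r^'d) ** transpose E)
    \<le> norm A * norm B + norm C * norm E"
  using norm_triangle_ineq[of "A ** transpose B" "C ** transpose E"]
    norm_matrix_mult_le[of A "transpose B"] norm_matrix_mult_le[of C "transpose E"]
  by (simp add: norm_transpose)

lemma norm_resid_deriv_le: "norm (resid_deriv Sh X E) \<le> 2 * norm X * norm E * norm Sh"
proof -
  have "norm (resid_deriv Sh X E) \<le> norm (E ** transpose X + X ** transpose E) * norm Sh"
    unfolding resid_deriv_def norm_minus_cancel by (rule norm_matrix_mult_le)
  also have "\<dots> \<le> (norm E * norm X + norm X * norm E) * norm Sh"
    by (intro mult_right_mono norm_sum_matrix_mult_transpose_le) simp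
  finally show ?thesis
    by (simp add: algebra_simps)
qed

lemma norm_egrad_wsm_le:
  assumes \<rho>: "\<rho> > 0" and \<mu>: "\<mu> > 0"
  shows "norm (egrad (\<lambda>Y. wsm \<rho> Sh Y \<mu>) X) \<le> 4 * \<rho> * norm X * norm Sh"
proof -
  define g where "g = egrad (\<lambda>Y. wsm \<rho> Sh Y \<mu>) X"
  have "norm g * norm g = 2 * \<rho> * (huber_grad (\<mu> / 2) (resid Sh X) \<bullet> resid_deriv Sh X g)"
    unfolding g_def egrad_wsm(2)[OF \<rho> \<mu>, symmetric]
    by (simp add: power2_norm_eq_inner[symmetric] power2_eq_square)
  also have "\<dots> \<le> 2 * \<rho> * (norm (huber_grad (\<mu> / 2) (resid Sh X)) * norm (resid_deriv Sh X g))"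
    using \<rho> by (intro mult_left_mono norm_cauchy_schwarz) auto
  also have "\<dots> \<le> 2 * \<rho> * (1 * (2 * norm X * norm g * norm Sh))"
    using \<rho> \<mu> by (intro mult_left_mono mult_mono norm_huber_grad_le norm_resid_deriv_le) auto
  finally have "norm g * norm g \<le> (4 * \<rho> * norm X * norm Sh) * norm g"
    by (simp add: algebra_simps)
  then show ?thesis
    unfolding g_def[symmetric] using \<rho> by (cases "norm g = 0") (auto simp: mult_le_cancel_right)
qed

lemma resid_add: "resid Sh (X + E) - resid Sh X = resid_deriv Sh X E - (E ** transpose E) ** Sh"
  by (simp add: resid_def resid_deriv_def matrix_mult_simps transpose_simps algebra_simps)

lemma norm_resid_diff_le:
  "norm (resid Sh Y - resid Sh X) \<le> (norm X + norm Y) * norm Sh * norm (Y - X)"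
proof -
  have "resid Sh Y - resid Sh X = - ((Y ** transpose (Y - X) + (Y - X) ** transpose X) ** Sh)"
    by (simp add: resid_def matrix_mult_simps transpose_simps algebra_simps)
  then have "norm (resid Sh Y - resid Sh X)
      \<le> norm (Y ** transpose (Y - X) + (Y - X) ** transpose X) * norm Sh"
    by (simp add: norm_matrix_mult_le)
  also have "\<dots> \<le> (norm Y * norm (Y - X) + norm (Y - X) * norm X) * norm Sh"
    by (intro mult_right_mono norm_sum_matrix_mult_transpose_le) simp
  finally show ?thesis
    by (simp add: algebra_simps)
qed

lemma inner_resid_add_le:
  assumes "norm Z \<le> 1"
  shows "Z \<bullet> (resid Sh (X + E) - resid Sh X) \<le> Z \<bullet> resid_deriv Sh X E + norm Sh * (norm E)\<^sup>2"
proof -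
  have "- (Z \<bullet> ((E ** transpose E) ** Sh)) \<le> norm Z * norm ((E ** transpose E) ** Sh)"
    using Cauchy_Schwarz_ineq2[of Z "(E ** transpose E) ** Sh"] by linarith
  also have "\<dots> \<le> 1 * (norm E * norm E * norm Sh)"
  proof (intro mult_mono)
    show "norm ((E ** transpose E) ** Sh) \<le> norm E * norm E * norm Sh"
      using norm_matrix_mult_le[of "E ** transpose E" Sh]
        mult_right_mono[OF norm_matrix_mult_le[of E "transpose E"] norm_ge_zero[of Sh]]
      by (simp add: norm_transpose)
  qed (use assms in auto)
  moreover have "Z \<bullet> (resid Sh (X + E) - resid Sh X) = Z \<bullet> resid_deriv Sh X E - Z \<bullet> ((E ** transpose E) ** Sh)"
    by (simp only: resid_add inner_diff_right)
  ultimately show ?thesis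
    by (simp add: power2_eq_square algebra_simps)
qed

lemma wsm_le_quadratic:
  assumes \<rho>: "\<rho> > 0" and \<mu>: "\<mu> > 0"
  shows "wsm \<rho> Sh Y \<mu> \<le> wsm \<rho> Sh X \<mu> + egrad (\<lambda>Y. wsm \<rho> Sh Y \<mu>) X \<bullet> (Y - X)
     + (2 * \<rho> * norm Sh + 4 * \<rho> / \<mu> * ((norm X + norm Y) * norm Sh)\<^sup>2) * (norm (Y - X))\<^sup>2"
proof -
  define Z where "Z = huber_grad (\<mu> / 2) (resid Sh X)"
  define q where "q = ((norm X + norm Y) * norm Sh)\<^sup>2 * (norm (Y - X))\<^sup>2"
  have r: "\<mu> / 2 > 0"
    using \<mu> by simp
  have "(norm (resid Sh Y - resid Sh X))\<^sup>2 \<le> q"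
    using power_mono[OF norm_resid_diff_le[of Sh Y X] norm_ge_zero, of 2]
    by (simp add: q_def power_mult_distrib)
  from mult_left_mono[OF this, of "2 / \<mu>"] \<mu>
  have "(norm (resid Sh Y - resid Sh X))\<^sup>2 / (\<mu> / 2) \<le> 2 / \<mu> * q"
    by (simp add: mult.commute)
  moreover have "huber (\<mu> / 2) (resid Sh Y) \<le> huber (\<mu> / 2) (resid Sh X)
      + Z \<bullet> (resid Sh Y - resid Sh X) + (norm (resid Sh Y - resid Sh X))\<^sup>2 / (\<mu> / 2)"
    unfolding Z_def by (rule huber_le_quadratic[OF r])
  moreover have "Z \<bullet> (resid Sh Y - resid Sh X) \<le> Z \<bullet> resid_deriv Sh X (Y - X) + norm Sh * (norm (Y - X))\<^sup>2"
    using inner_resid_add_le[OF norm_huber_grad_le[OF r], where Sh = Sh and X = X and E = "Y - X"]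
    by (simp add: Z_def)
  ultimately have "huber (\<mu> / 2) (resid Sh Y) \<le> huber (\<mu> / 2) (resid Sh X) + Z \<bullet> resid_deriv Sh X (Y - X)
      + norm Sh * (norm (Y - X))\<^sup>2 + 2 / \<mu> * q"
    by linarith
  from mult_left_mono[OF this, of "2 * \<rho>"] \<rho> show ?thesis
    unfolding egrad_wsm(2)[OF \<rho> \<mu>] wsm_eq_huber[OF \<rho> \<mu>, of Sh X] wsm_eq_huber[OF \<rho> \<mu>, of Sh Y]
      Z_def[symmetric] q_def
    by (simp add: distrib_left distrib_right mult.assoc)
qed

section \<open>Second-order behaviour of retractions\<close>

lemma norm_diff_le_of_derivative_le:
  fixes f f' :: "real \<Rightarrow> 'b::real_inner"
  assumes "a \<le> b"
    and deriv: "\<And>t. t \<in> {a..b} \<Longrightarrow> (f has_derivative (\<lambda>s. s *\<^sub>R f' t)) (at t)"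
    and bound: "\<And>t. t \<in> {a..b} \<Longrightarrow> norm (f' t) \<le> B"
  shows "norm (f b - f a) \<le> B * (b - a)"
proof (cases "a = b")
  case False
  with \<open>a \<le> b\<close> have "a < b"
    by simp
  have "continuous_on {a..b} f"
    by (rule has_derivative_continuous_on, rule has_derivative_at_withinI, rule deriv)
  moreover have "(f has_derivative (\<lambda>s. s *\<^sub>R f' t)) (at t)" if "a < t" "t < b" for t
    by (rule deriv) (use that in auto)
  ultimately have "\<exists>\<xi>\<in>{a<..<b}. norm (f b - f a) \<le> norm ((b - a) *\<^sub>R f' \<xi>)"
    by (rule mvt_general[OF \<open>a < b\<close>])
  then obtain \<xi> where "a < \<xi>" "\<xi> < b" and "norm (f b - f a) \<le> (b - a) * norm (f' \<xi>)"
    using \<open>a < b\<close> by auto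
  note \<open>norm (f b - f a) \<le> (b - a) * norm (f' \<xi>)\<close>
  also have "(b - a) * norm (f' \<xi>) \<le> (b - a) * B"
    using \<open>a < \<xi>\<close> \<open>\<xi> < b\<close> bound[of \<xi>] by (intro mult_left_mono) auto
  finally show ?thesis
    by (simp add: mult.commute)
qed simp

lemma second_order_remainder_le:
  fixes \<phi> \<phi>' \<phi>'' :: "real \<Rightarrow> 'b::real_inner"
  assumes d1: "\<And>t. t \<in> {0..1} \<Longrightarrow> (\<phi> has_derivative (\<lambda>s. s *\<^sub>R \<phi>' t)) (at t)"
    and d2: "\<And>t. t \<in> {0..1} \<Longrightarrow> (\<phi>' has_derivative (\<lambda>s. s *\<^sub>R \<phi>'' t)) (at t)"
    and C: "\<And>t. t \<in> {0..1} \<Longrightarrow> norm (\<phi>'' t) \<le> C"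
  shows "norm (\<phi> 1 - \<phi> 0 - \<phi>' 0) \<le> C"
proof -
  have "norm (\<phi>'' 0) \<le> C"
    by (rule C) simp
  then have "C \<ge> 0"
    by (rule order_trans[OF norm_ge_zero])
  have "norm (\<phi>' t - \<phi>' 0) \<le> C" if "t \<in> {0..1}" for t
  proof -
    have "norm (\<phi>' t - \<phi>' 0) \<le> C * (t - 0)"
      using that by (intro norm_diff_le_of_derivative_le[where f' = \<phi>''] d2 C) auto
    also have "\<dots> \<le> C"
      using that \<open>C \<ge> 0\<close> by (simp add: mult_left_le)
    finally show ?thesis .
  qed
  moreover have "((\<lambda>t. \<phi> t - t *\<^sub>R \<phi>' 0) has_derivative (\<lambda>s. s *\<^sub>R (\<phi>' t - \<phi>' 0))) (at t)"
    if "t \<in> {0..1}" for t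
    using has_derivative_diff[OF d1[OF that] bounded_linear_imp_has_derivative[OF
        bounded_linear_scaleR_left[of "\<phi>' 0"]]]
    by (simp add: scaleR_diff_right)
  ultimately have "norm ((\<phi> 1 - 1 *\<^sub>R \<phi>' 0) - (\<phi> 0 - 0 *\<^sub>R \<phi>' 0)) \<le> C * (1 - 0)"
    by (intro norm_diff_le_of_derivative_le) auto
  then show ?thesis
    by (simp add: algebra_simps)
qed

lemma bilinear_norm_le:
  fixes f :: "'a::euclidean_space \<Rightarrow> 'b::euclidean_space \<Rightarrow> 'c::real_normed_vector"
  assumes "bilinear f"
  shows "norm (f x y) \<le> (\<Sum>i\<in>Basis. \<Sum>j\<in>Basis. norm (f i j)) * norm x * norm y"
proof -
  have "f x y = (\<Sum>(i, j)\<in>Basis \<times> Basis. ((x \<bullet> i) * (y \<bullet> j)) *\<^sub>R f i j)"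
    using bilinear_sum[OF assms, of "\<lambda>i. (x \<bullet> i) *\<^sub>R i" Basis "\<lambda>j. (y \<bullet> j) *\<^sub>R j" Basis]
    by (simp add: euclidean_representation bilinear_lmul[OF assms] bilinear_rmul[OF assms]
        mult.commute)
  also have "norm \<dots> \<le> (\<Sum>(i, j)\<in>Basis \<times> Basis. norm x * norm y * norm (f i j))"
  proof (rule sum_norm_le, clarify)
    fix i :: 'a and j :: 'b assume "i \<in> Basis" "j \<in> Basis"
    then have "\<bar>x \<bullet> i\<bar> * \<bar>y \<bullet> j\<bar> \<le> norm x * norm y"
      by (intro mult_mono Basis_le_norm) auto
    then show "norm (((x \<bullet> i) * (y \<bullet> j)) *\<^sub>R f i j) \<le> norm x * norm y * norm (f i j)"
      by (simp add: abs_mult mult_right_mono)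
  qed
  also have "\<dots> = (\<Sum>i\<in>Basis. \<Sum>j\<in>Basis. norm (f i j)) * norm x * norm y"
    by (simp add: sum.cartesian_product[symmetric] sum_distrib_left mult_ac)
  finally show ?thesis .
qed

lemma bilinear_derivative_of_linear_family:
  assumes U: "open U" "x \<in> U" and lin: "\<And>y. y \<in> U \<Longrightarrow> linear (f y)"
    and deriv: "\<And>k. ((\<lambda>y. f y k) has_derivative (\<lambda>h. f' h k)) (at x)"
  shows "bilinear f'"
  unfolding bilinear_def
proof (intro conjI allI)
  show "linear (\<lambda>h. f' h k)" for k
    by (rule has_derivative_linear[OF deriv])
  fix h
  show "linear (f' h)"
  proof (rule linearI)
    fix k1 k2
    have "((\<lambda>y. f y k1 + f y k2) has_derivative (\<lambda>h. f' h k1 + f' h k2)) (at x)"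
      by (rule has_derivative_add[OF deriv deriv])
    then have "((\<lambda>y. f y (k1 + k2)) has_derivative (\<lambda>h. f' h k1 + f' h k2)) (at x)"
      by (rule has_derivative_transform_within_open[OF _ U]) (simp add: lin linear_add)
    with deriv have "(\<lambda>h. f' h (k1 + k2)) = (\<lambda>h. f' h k1 + f' h k2)"
      by (rule has_derivative_unique)
    then show "f' h (k1 + k2) = f' h k1 + f' h k2"
      by (rule fun_cong)
  next
    fix c k
    have "((\<lambda>y. c *\<^sub>R f y k) has_derivative (\<lambda>h. c *\<^sub>R f' h k)) (at x)"
      by (rule has_derivative_scaleR_right[OF deriv])
    then have "((\<lambda>y. f y (c *\<^sub>R k)) has_derivative (\<lambda>h. c *\<^sub>R f' h k)) (at x)"
      by (rule has_derivative_transform_within_open[OF _ U]) (simp add: lin linear_scale)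
    with deriv have "(\<lambda>h. f' h (c *\<^sub>R k)) = (\<lambda>h. c *\<^sub>R f' h k)"
      by (rule has_derivative_unique)
    then show "f' h (c *\<^sub>R k) = c *\<^sub>R f' h k"
      by (rule fun_cong)
  qed
qed

lemma smooth_on_first_second_derivatives:
  assumes smooth: "smooth_on F U" and U: "open U"
  obtains D1 D2 where "\<And>x. x \<in> U \<Longrightarrow> (F has_derivative D1 x) (at x)"
    and "\<And>x k. x \<in> U \<Longrightarrow> ((\<lambda>y. D1 y k) has_derivative (\<lambda>h. D2 x h k)) (at x)"
    and "\<And>h k. continuous_on U (\<lambda>x. D2 x h k)"
proof -
  obtain Dn :: "nat \<Rightarrow> 'a \<Rightarrow> 'a list \<Rightarrow> 'b" where
    D0: "\<And>x. x \<in> U \<Longrightarrow> Dn 0 x [] = F x" and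
    Dc: "\<And>n hs. length hs = n \<Longrightarrow> continuous_on U (\<lambda>y. Dn n y hs)" and
    Dd: "\<And>n hs x. length hs = n \<Longrightarrow> x \<in> U \<Longrightarrow>
      ((\<lambda>y. Dn n y hs) has_derivative (\<lambda>h. Dn (Suc n) x (h # hs))) (at x)"
    using smooth unfolding smooth_on_def by blast
  show ?thesis
  proof
    show "(F has_derivative (\<lambda>h. Dn 1 x [h])) (at x)" if "x \<in> U" for x
      using has_derivative_transform_within_open[OF Dd[of "[]" 0 x] U that] that D0 by simp
    show "((\<lambda>y. Dn 1 y [k]) has_derivative (\<lambda>h. Dn 2 x [h, k])) (at x)" if "x \<in> U" for x k
      using Dd[of "[k]" 1 x] that by (simp add: numeral_2_eq_2)
    show "continuous_on U (\<lambda>x. Dn 2 x [h, k])" for h k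
      by (rule Dc) simp
  qed
qed

lemma smooth_on_second_order_remainder:
  fixes F :: "'a::euclidean_space \<Rightarrow> 'b::euclidean_space"
  assumes smooth: "smooth_on F U" and U: "open U" and K: "compact K" "K \<subseteq> U"
  shows "\<exists>M\<ge>0. \<forall>x h. (\<forall>t\<in>{0..1}. x + t *\<^sub>R h \<in> K) \<longrightarrow>
           (\<exists>L. (F has_derivative L) (at x) \<and> norm (F (x + h) - F x - L h) \<le> M * (norm h)\<^sup>2)"
proof -
  obtain D1 D2 where F': "\<And>x. x \<in> U \<Longrightarrow> (F has_derivative D1 x) (at x)"
    and D1': "\<And>x k. x \<in> U \<Longrightarrow> ((\<lambda>y. D1 y k) has_derivative (\<lambda>h. D2 x h k)) (at x)"
    and D2: "\<And>h k. continuous_on U (\<lambda>x. D2 x h k)"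
    using smooth_on_first_second_derivatives[OF smooth U] by blast
  have bil: "bilinear (D2 x)" if x: "x \<in> U" for x
  proof (rule bilinear_derivative_of_linear_family[OF U x])
    show "linear (D1 y)" if "y \<in> U" for y
      using F'[OF that] by (rule has_derivative_linear)
    show "((\<lambda>y. D1 y k) has_derivative (\<lambda>h. D2 x h k)) (at x)" for k
      using D1'[OF x] .
  qed
  define Q where "Q x = (\<Sum>i\<in>Basis. \<Sum>j\<in>Basis. norm (D2 x i j))" for x
  have "continuous_on K Q"
    unfolding Q_def by (intro continuous_on_sum continuous_on_norm continuous_on_subset[OF D2 K(2)])
  from compact_imp_bounded[OF compact_continuous_image[OF this K(1)]]
  obtain M0 where "\<forall>x\<in>K. norm (Q x) \<le> M0"
    unfolding bounded_iff by blast
  then have M: "\<forall>x\<in>K. Q x \<le> max M0 0"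
    by fastforce
  show ?thesis
  proof (intro exI[of _ "max M0 0"] conjI allI impI)
    show "max M0 0 \<ge> 0"
      by simp
    fix x h assume seg: "\<forall>t\<in>{0..1}. x + t *\<^sub>R h \<in> K"
    have inU: "x + t *\<^sub>R h \<in> U" if "t \<in> {0..1}" for t
      using seg that K(2) by blast
    have path: "((\<lambda>t. x + t *\<^sub>R h) has_derivative (\<lambda>s. s *\<^sub>R h)) (at t)" for t
      by (auto intro!: derivative_eq_intros)
    have "norm (F (x + 1 *\<^sub>R h) - F (x + 0 *\<^sub>R h) - D1 (x + 0 *\<^sub>R h) h) \<le> max M0 0 * (norm h)\<^sup>2"
    proof (rule second_order_remainder_le)
      fix t :: real assume t: "t \<in> {0..1}"
      show "((\<lambda>t. F (x + t *\<^sub>R h)) has_derivative (\<lambda>s. s *\<^sub>R D1 (x + t *\<^sub>R h) h)) (at t)"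
        using has_derivative_compose[OF path F'[OF inU[OF t]]]
          linear_scale[OF has_derivative_linear[OF F'[OF inU[OF t]]]] by simp
      show "((\<lambda>t. D1 (x + t *\<^sub>R h) h) has_derivative (\<lambda>s. s *\<^sub>R D2 (x + t *\<^sub>R h) h h)) (at t)"
        using has_derivative_compose[OF path D1'[OF inU[OF t]]]
          bilinear_lmul[OF bil[OF inU[OF t]]] by simp
      have "norm (D2 (x + t *\<^sub>R h) h h) \<le> Q (x + t *\<^sub>R h) * norm h * norm h"
        unfolding Q_def by (rule bilinear_norm_le[OF bil[OF inU[OF t]]])
      also have "\<dots> \<le> max M0 0 * norm h * norm h"
        using M seg t by (intro mult_right_mono) auto
      finally show "norm (D2 (x + t *\<^sub>R h) h h) \<le> max M0 0 * (norm h)\<^sup>2"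
        by (simp add: power2_eq_square mult.assoc)
    qed
    then show "\<exists>L. (F has_derivative L) (at x) \<and> norm (F (x + h) - F x - L h) \<le> max M0 0 * (norm h)\<^sup>2"
      using F'[OF inU[of 0]] by auto
  qed
qed

lemma compact_tangent_bundle_cball:
  "compact {p :: (real^'r^'d) \<times> (real^'r^'d). fst p \<in> stiefel \<and> snd p \<in> tangent (fst p) \<and> norm (snd p) \<le> B}"
    (is "compact ?K")
proof -
  note continuous =
    bounded_bilinear.continuous_on[OF bounded_bilinear_matrix_mult]
    bounded_linear.continuous_on[OF bounded_linear_transpose]
  have "?K = {p. transpose (fst p) ** fst p = mat 1} \<inter>
      {p. transpose (fst p) ** snd p + transpose (snd p) ** fst p = 0} \<inter> {p. norm (snd p) \<le> B}"
    by (auto simp: stiefel_def tangent_def)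
  moreover have "closed \<dots>"
    by (intro closed_Int closed_Collect_eq closed_Collect_le continuous continuous_intros)
  moreover have "bounded ?K"
    unfolding bounded_iff
  proof (intro exI ballI)
    fix p assume "p \<in> ?K"
    then show "norm p \<le> sqrt (real CARD('r)) + B"
      using norm_Pair_le[of "fst p" "snd p"] norm_stiefel[of "fst p"] by auto
  qed
  ultimately show ?thesis
    by (simp add: compact_eq_bounded_closed)
qed

lemma retraction_derivative_tangent:
  assumes ret: "retraction Ret" and X: "X \<in> stiefel" and D: "D \<in> tangent X"
    and L: "((\<lambda>p. Ret (fst p) (snd p)) has_derivative L) (at (X, 0))"
  shows "L (0, D) = D"
proof -
  have path: "((\<lambda>t. (X, t *\<^sub>R D)) has_derivative (\<lambda>s. (0, s *\<^sub>R D))) (at 0)"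
    by (auto intro!: derivative_eq_intros)
  have "((\<lambda>p. Ret (fst p) (snd p)) has_derivative L) (at ((\<lambda>t. (X, t *\<^sub>R D)) 0))"
    using L by simp
  from has_derivative_compose[OF path this]
  have "((\<lambda>t. Ret X (t *\<^sub>R D)) has_derivative (\<lambda>s. L (0, s *\<^sub>R D))) (at 0)"
    by simp
  moreover have "((\<lambda>t. Ret X (t *\<^sub>R D)) has_derivative (\<lambda>s. s *\<^sub>R D)) (at 0)"
    using ret X D unfolding retraction_def has_vector_derivative_def by blast
  ultimately have "(\<lambda>s. L (0, s *\<^sub>R D)) = (\<lambda>s. s *\<^sub>R D)"
    by (rule has_derivative_unique)
  then show ?thesis
    by (metis scaleR_one)
qed

lemma retraction_second_order_bound:
  fixes Ret :: "real^'r^'d \<Rightarrow> real^'r^'d \<Rightarrow> real^'r^'d"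
  assumes ret: "retraction Ret"
  shows "\<exists>M\<ge>0. \<forall>X\<in>stiefel. \<forall>D\<in>tangent X. norm D \<le> B \<longrightarrow> norm (Ret X D - X - D) \<le> M * (norm D)\<^sup>2"
proof -
  define K where "K = {p :: (real^'r^'d) \<times> (real^'r^'d). fst p \<in> stiefel \<and> snd p \<in> tangent (fst p) \<and> norm (snd p) \<le> B}"
  obtain U where U: "open U" "{(X, D). X \<in> stiefel \<and> D \<in> tangent X} \<subseteq> U"
    "smooth_on (\<lambda>p. Ret (fst p) (snd p)) U"
    using ret unfolding retraction_def by auto
  have "K \<subseteq> U"
    using U(2) by (auto simp: K_def)
  with U obtain M where "M \<ge> 0" and M: "\<And>x h. \<forall>t\<in>{0..1}. x + t *\<^sub>R h \<in> K \<Longrightarrow>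
      \<exists>L. ((\<lambda>p. Ret (fst p) (snd p)) has_derivative L) (at x)
        \<and> norm (Ret (fst (x + h)) (snd (x + h)) - Ret (fst x) (snd x) - L h) \<le> M * (norm h)\<^sup>2"
    using smooth_on_second_order_remainder[OF U(3) U(1) compact_tangent_bundle_cball, of B]
    unfolding K_def by blast
  show ?thesis
  proof (intro exI[of _ M] conjI \<open>M \<ge> 0\<close> ballI impI)
    fix X D :: "real^'r^'d" assume X: "X \<in> stiefel" and D: "D \<in> tangent X" and "norm D \<le> B"
    have "(X, 0) + t *\<^sub>R (0, D) \<in> K" if "t \<in> {0..1}" for t
    proof -
      have "norm (t *\<^sub>R D) \<le> norm D"
        using that by (simp add: mult_left_le_one_le)
      with \<open>norm D \<le> B\<close> have "norm (t *\<^sub>R D) \<le> B"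
        by linarith
      then show ?thesis
        using X D subspace_tangent[of X] by (simp add: K_def subspace_scale)
    qed
    then obtain L where L: "((\<lambda>p. Ret (fst p) (snd p)) has_derivative L) (at (X, 0))"
      and bound: "norm (Ret X D - Ret X 0 - L (0, D)) \<le> M * (norm D)\<^sup>2"
      using M[of "(X, 0)" "(0, D)"] by auto
    moreover have "Ret X 0 = X"
      using ret X by (simp add: retraction_def)
    ultimately show "norm (Ret X D - X - D) \<le> M * (norm D)\<^sup>2"
      using retraction_derivative_tangent[OF ret X D L] by simp
  qed
qed

section \<open>Subgradients orthogonal to a subspace\<close>

lemma nonneg_of_forall_add_mult_nonneg:
  fixes x c :: real
  assumes "\<And>t. 0 < t \<Longrightarrow> t \<le> 1 \<Longrightarrow> 0 \<le> x + t * c"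
  shows "0 \<le> x"
proof (cases "c \<le> 0")
  case True
  then show ?thesis
    using assms[of 1] by simp
next
  case False
  show ?thesis
  proof (rule field_le_epsilon)
    fix e :: real assume "0 < e"
    with False have "0 < min 1 (e / c)" and "min 1 (e / c) * c \<le> e"
      by (auto simp: min_def field_simps)
    with assms[of "min 1 (e / c)"] show "0 \<le> x + e"
      by simp
  qed
qed

lemma convex_strict_epigraph:
  assumes "convex_on UNIV f"
  shows "convex {z :: 'a::real_vector \<times> real. f (fst z) < snd z}"
proof (rule convexI)
  fix x y :: "'a \<times> real" and u v :: real
  assume x: "x \<in> {z. f (fst z) < snd z}" and y: "y \<in> {z. f (fst z) < snd z}"
    and uv: "0 \<le> u" "0 \<le> v" "u + v = 1"
  have "f (u *\<^sub>R fst x + v *\<^sub>R fst y) \<le> u * f (fst x) + v * f (fst y)"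
    using convex_onD[OF assms, of v "fst x" "fst y"] uv by (simp add: eq_diff_eq[symmetric])
  also have "\<dots> < u * snd x + v * snd y"
  proof (cases "u = 0")
    case False
    with x y uv have "u * f (fst x) < u * snd x" "v * f (fst y) \<le> v * snd y"
      by (simp_all add: mult_left_mono)
    then show ?thesis
      by linarith
  qed (use y uv in simp)
  finally show "u *\<^sub>R x + v *\<^sub>R y \<in> {z. f (fst z) < snd z}"
    by simp
qed

lemma inner_bounded_on_subspace_eq_0:
  assumes "subspace T" and bounded: "\<And>W. W \<in> T \<Longrightarrow> p \<bullet> W \<le> b" and "W \<in> T"
  shows "p \<bullet> W = 0"
proof (rule ccontr)
  assume "p \<bullet> W \<noteq> 0"
  then have "p \<bullet> (((b + 1) / (p \<bullet> W)) *\<^sub>R W) = b + 1"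
    by simp
  with bounded[OF subspace_scale[OF assms(1,3)], of "(b + 1) / (p \<bullet> W)"] show False
    by linarith
qed

text \<open>Proof: separate the strict epigraph of \<open>\<sigma>\<close> from \<open>T \<times> {0}\<close>.\<close>

lemma convex_nonneg_on_subspace_subgradient:
  fixes \<sigma> :: "'a::euclidean_space \<Rightarrow> real"
  assumes cv: "convex_on UNIV \<sigma>" and \<sigma>0: "\<sigma> 0 = 0" and T: "subspace T"
    and nonneg: "\<And>W. W \<in> T \<Longrightarrow> \<sigma> W \<ge> 0"
  shows "\<exists>g. (\<forall>W. g \<bullet> W \<le> \<sigma> W) \<and> (\<forall>W\<in>T. g \<bullet> W = 0)"
proof -
  define A where "A = {z :: 'a \<times> real. \<sigma> (fst z) < snd z}"
  define L where "L = (\<lambda>W. (W, 0::real)) ` T"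
  have "convex A"
    unfolding A_def by (rule convex_strict_epigraph[OF cv])
  moreover have "convex L"
    unfolding L_def by (intro convex_linear_image subspace_imp_convex T) (simp add: linear_iff)
  moreover have "L \<inter> A = {}"
    using nonneg by (force simp: L_def A_def)
  moreover have "(0, 1) \<in> A" "(0, 0) \<in> L"
    using \<sigma>0 subspace_0[OF T] by (auto simp: A_def L_def)
  ultimately obtain a b where "a \<noteq> 0" and aL: "\<forall>x\<in>L. a \<bullet> x \<le> b" and aA: "\<forall>x\<in>A. b \<le> a \<bullet> x"
    using separating_hyperplane_sets[of L A] by blast
  obtain p q where a: "a = (p, q)"
    by fastforce
  have pT: "p \<bullet> W \<le> b" if "W \<in> T" for W
    using aL that by (auto simp: L_def a inner_Pair)
  have "b \<ge> 0"
    using pT[OF subspace_0[OF T]] by simp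
  have above: "b \<le> p \<bullet> W + q * t" if "\<sigma> W < t" for W t
    using aA that by (auto simp: A_def a inner_Pair)
  have "q \<ge> 0"
  proof (rule ccontr)
    assume "\<not> q \<ge> 0"
    with above[of 0 "(b + 1) / (- q)"] \<sigma>0 \<open>b \<ge> 0\<close> show False
      by (simp add: divide_pos_neg)
  qed
  have key: "b \<le> p \<bullet> W + q * \<sigma> W" for W
  proof -
    have "0 \<le> (p \<bullet> W + q * \<sigma> W - b) + t * q" if "0 < t" for t
      using above[of W "\<sigma> W + t"] that by (simp add: algebra_simps)
    then show ?thesis
      using nonneg_of_forall_add_mult_nonneg[of "p \<bullet> W + q * \<sigma> W - b" q] by simp
  qed
  have "q > 0"
  proof (rule ccontr)
    assume "\<not> q > 0"
    with \<open>q \<ge> 0\<close> key[of "- p"] \<open>b \<ge> 0\<close> have "p \<bullet> p \<le> 0"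
      by simp
    then have "p = 0"
      using inner_ge_zero[of p] by (simp add: order_antisym)
    with \<open>\<not> q > 0\<close> \<open>q \<ge> 0\<close> \<open>a \<noteq> 0\<close> show False
      by (simp add: a zero_prod_def)
  qed
  show ?thesis
  proof (intro exI[of _ "- (1 / q) *\<^sub>R p"] conjI allI ballI)
    show "(- (1 / q) *\<^sub>R p) \<bullet> W \<le> \<sigma> W" for W
      using key[of W] \<open>b \<ge> 0\<close> \<open>q > 0\<close> by (simp add: field_simps)
    show "(- (1 / q) *\<^sub>R p) \<bullet> W = 0" if "W \<in> T" for W
      using inner_bounded_on_subspace_eq_0[OF T pT that] by simp
  qed
qed

section \<open>Counting the iterations of an adaptive smoothing scheme\<close>

lemma smoothing_param_eq_power:
  fixes \<mu> :: "nat \<Rightarrow> real"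
  assumes "\<mu> 0 = \<mu>0" and "\<And>k. \<mu> (Suc k) = (if P k then \<theta> * \<mu> k else \<mu> k)"
  shows "\<mu> n = \<mu>0 * \<theta> ^ card {i. i < n \<and> P i}"
proof (induction n)
  case (Suc n)
  show ?case
  proof (cases "P n")
    case True
    then have "{i. i < Suc n \<and> P i} = insert n {i. i < n \<and> P i}"
      by auto
    then have "card {i. i < Suc n \<and> P i} = Suc (card {i. i < n \<and> P i})"
      by simp
    moreover have "\<mu> (Suc n) = \<theta> * \<mu> n"
      using True assms(2)[of n] by simp
    ultimately show ?thesis
      using Suc by simp
  next
    case False
    then have "{i. i < Suc n \<and> P i} = {i. i < n \<and> P i}"
      using less_Suc_eq by auto
    moreover have "\<mu> (Suc n) = \<mu> n"
      using False assms(2)[of n] by simp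
    ultimately show ?thesis
      using Suc by simp
  qed
qed (simp add: assms(1))

lemma geometric_decay_count_le:
  fixes \<theta> \<epsilon> \<mu>0 :: real
  assumes \<theta>: "0 < \<theta>" "\<theta> < 1" and "0 < \<epsilon>" and decay: "\<theta> * \<epsilon> \<le> \<mu>0 * \<theta> ^ n"
  shows "real n \<le> \<mu>0 / (1 - \<theta>) * (1 / \<epsilon>)"
proof -
  define x where "x = 1 / \<theta> - 1"
  have "x \<ge> 0"
    using \<theta> by (simp add: x_def)
  have "(1 + real n * x) * (\<theta> * \<epsilon>) \<le> (1 + x) ^ n * (\<mu>0 * \<theta> ^ n)"
    using \<theta> \<open>0 < \<epsilon>\<close> \<open>x \<ge> 0\<close> by (intro mult_mono[OF Bernoulli_inequality decay]) auto
  also have "\<dots> = \<mu>0"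
    using \<theta> by (simp add: x_def power_mult_distrib[symmetric])
  moreover have "(1 + real n * x) * (\<theta> * \<epsilon>) = \<theta> * \<epsilon> + real n * ((1 - \<theta>) * \<epsilon>)"
    using \<theta> by (simp add: x_def field_simps)
  ultimately have "real n * ((1 - \<theta>) * \<epsilon>) \<le> \<mu>0"
    using \<theta> \<open>0 < \<epsilon>\<close> by (smt (verit) mult_pos_pos)
  with \<theta> \<open>0 < \<epsilon>\<close> show ?thesis
    by (simp add: pos_le_divide_eq)
qed

lemma smoothing_param_lower_bound:
  fixes \<mu> :: "nat \<Rightarrow> real"
  assumes \<theta>: "0 < \<theta>" "\<theta> < 1" and \<mu>_0: "\<mu> 0 = \<mu>0"
    and \<mu>_Suc: "\<And>k. \<mu> (Suc k) = (if P k then \<theta> * \<mu> k else \<mu> k)"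
    and \<epsilon>: "0 < \<epsilon>" "\<epsilon> \<le> \<mu>0" and large: "\<And>k. k < n \<Longrightarrow> P k \<Longrightarrow> \<epsilon> < \<mu> k"
  shows "k \<le> n \<Longrightarrow> \<theta> * \<epsilon> \<le> \<mu> k"
proof (induction k)
  case 0
  have "\<theta> * \<epsilon> \<le> \<epsilon>"
    using \<theta> \<epsilon> by (intro mult_left_le_one_le) auto
  with \<epsilon> \<mu>_0 show ?case
    by linarith
next
  case (Suc k)
  with large[of k] \<theta> show ?case
    by (auto simp: \<mu>_Suc)
qed

lemma count_slow_steps_le:
  fixes F \<mu> :: "nat \<Rightarrow> real"
  assumes mono: "\<And>k. F (Suc k) \<le> F k" and descent: "\<And>k. \<not> P k \<Longrightarrow> F (Suc k) \<le> F k - c * (\<mu> k)^3"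
    and "c \<ge> 0" and "m \<ge> 0" and slow: "\<And>k. k < n \<Longrightarrow> \<not> P k \<Longrightarrow> m \<le> \<mu> k"
  shows "real (card {k. k < n \<and> \<not> P k}) * (c * m^3) \<le> F 0 - F n"
proof -
  have "real (card {k. k < n \<and> \<not> P k}) * (c * m^3) = (\<Sum>k | k < n \<and> \<not> P k. c * m^3)"
    by simp
  also have "\<dots> \<le> (\<Sum>k | k < n \<and> \<not> P k. c * (\<mu> k)^3)"
    using slow \<open>c \<ge> 0\<close> \<open>m \<ge> 0\<close> by (intro sum_mono mult_left_mono power_mono) auto
  also have "\<dots> \<le> (\<Sum>k | k < n \<and> \<not> P k. F k - F (Suc k))"
    using descent by (intro sum_mono) (simp add: algebra_simps)
  also have "\<dots> \<le> (\<Sum>k<n. F k - F (Suc k))"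
    using mono by (intro sum_mono2) auto
  also have "\<dots> = F 0 - F n"
    by (simp add: sum_lessThan_telescope')
  finally show ?thesis .
qed

text \<open>As long as \<open>\<mu> \<ge> \<theta> \<epsilon>\<close>, geometric decay allows only \<open>O(1/\<epsilon>)\<close> steps with \<open>P\<close>, and
  each of the other steps spends \<open>c (\<theta> \<epsilon>)\<^sup>3\<close> of the bounded merit \<open>F\<close>.\<close>

lemma adaptive_smoothing_iteration_bound:
  fixes \<mu> F :: "nat \<Rightarrow> real" and P :: "nat \<Rightarrow> bool"
  assumes \<theta>: "0 < \<theta>" "\<theta> < 1" and c: "0 < c"
    and \<mu>_0: "\<mu> 0 = \<mu>0" and \<mu>_Suc: "\<And>k. \<mu> (Suc k) = (if P k then \<theta> * \<mu> k else \<mu> k)"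
    and mono: "\<And>k. F (Suc k) \<le> F k" and descent: "\<And>k. \<not> P k \<Longrightarrow> F (Suc k) \<le> F k - c * (\<mu> k)^3"
    and bounded: "\<And>k. lo \<le> F k" "F 0 \<le> hi"
    and \<epsilon>: "0 < \<epsilon>" "\<epsilon> < 1" "\<epsilon> \<le> \<mu>0"
  shows "\<exists>k. P k \<and> real k \<le> (\<mu>0 / (1 - \<theta>) + (hi - lo) / (c * \<theta>^3) + 1) * \<epsilon> powr -3 \<and> \<mu> k \<le> \<epsilon>"
proof (rule ccontr)
  define C where "C = \<mu>0 / (1 - \<theta>) + (hi - lo) / (c * \<theta>^3) + 1"
  define e3 where "e3 = 1 / \<epsilon>^3"
  define N where "N = nat \<lfloor>C * e3\<rfloor>"
  assume "\<not> ?thesis"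
  then have none: "\<not> (P k \<and> real k \<le> C * e3 \<and> \<mu> k \<le> \<epsilon>)" for k
    using \<epsilon> by (simp add: C_def e3_def powr_minus_divide powr_realpow)
  have "hi - lo \<ge> 0"
    using bounded(1)[of 0] bounded(2) by simp
  with \<theta> c \<epsilon> have "C \<ge> 1" "e3 > 0"
    by (simp_all add: C_def e3_def)
  then have N: "real N \<le> C * e3" "C * e3 < real N + 1"
    by (simp_all add: N_def)
  define n where "n = Suc N"
  have "\<epsilon> < \<mu> k" if "k < n" "P k" for k
    using none[of k] that N by (force simp: n_def)
  with \<theta> \<mu>_0 \<mu>_Suc \<epsilon> have low: "\<theta> * \<epsilon> \<le> \<mu> k" if "k \<le> n" for k
    using smoothing_param_lower_bound that by blast
  have "\<epsilon>^3 \<le> \<epsilon>"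
    using \<epsilon> by (simp add: power3_eq_cube mult_le_one mult_left_le_one_le)
  then have "1 / \<epsilon> \<le> e3"
    using \<epsilon> by (simp add: e3_def frac_le)
  have "real (card {k. k < n \<and> P k}) \<le> \<mu>0 / (1 - \<theta>) * (1 / \<epsilon>)"
    using low[of n] smoothing_param_eq_power[where \<mu> = \<mu> and P = P, OF \<mu>_0 \<mu>_Suc] \<theta> \<epsilon>
    by (intro geometric_decay_count_le) auto
  also have "\<dots> \<le> \<mu>0 / (1 - \<theta>) * e3"
    using \<open>1 / \<epsilon> \<le> e3\<close> \<theta> \<epsilon> by (intro mult_left_mono) auto
  finally have fast: "real (card {k. k < n \<and> P k}) \<le> \<mu>0 / (1 - \<theta>) * e3" .
  have "real (card {k. k < n \<and> \<not> P k}) * (c * (\<theta> * \<epsilon>)^3) \<le> F 0 - F n"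
    using low \<theta> \<epsilon> c by (intro count_slow_steps_le[where F = F and P = P, OF mono descent]) auto
  also have "\<dots> \<le> hi - lo"
    using bounded(1)[of n] bounded(2) by simp
  finally have "real (card {k. k < n \<and> \<not> P k}) \<le> (hi - lo) / (c * (\<theta> * \<epsilon>)^3)"
    using \<theta> \<epsilon> c by (simp add: pos_le_divide_eq)
  then have slow: "real (card {k. k < n \<and> \<not> P k}) \<le> (hi - lo) / (c * \<theta>^3) * e3"
    by (simp add: e3_def power_mult_distrib)
  have "{k. k < n \<and> P k} \<union> {k. k < n \<and> \<not> P k} = {..<n}"
    and "{k. k < n \<and> P k} \<inter> {k. k < n \<and> \<not> P k} = {}"
    by auto
  then have "card {k. k < n \<and> P k} + card {k. k < n \<and> \<not> P k} = n"
    using card_Un_disjoint[of "{k. k < n \<and> P k}" "{k. k < n \<and> \<not> P k}"] by simp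
  with fast slow have "real n \<le> (C - 1) * e3"
    by (simp add: C_def algebra_simps)
  with N \<open>e3 > 0\<close> show False
    by (simp add: n_def algebra_simps)
qed

lemma compact_stiefel: "compact (stiefel :: (real^'r^'d) set)"
proof -
  have "closed (stiefel :: (real^'r^'d) set)"
    unfolding stiefel_def
    by (intro closed_Collect_eq continuous_intros
        bounded_bilinear.continuous_on[OF bounded_bilinear_matrix_mult]
        bounded_linear.continuous_on[OF bounded_linear_transpose])
  moreover have "\<forall>X\<in>(stiefel :: (real^'r^'d) set). norm X \<le> sqrt (real CARD('r))"
    by (simp add: norm_stiefel)
  then have "bounded (stiefel :: (real^'r^'d) set)"
    by (auto simp: bounded_iff)
  ultimately show ?thesis
    by (simp add: compact_eq_bounded_closed)
qed

lemma wsm_mono: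
  assumes "0 < \<rho>" "0 < \<mu>'" "\<mu>' \<le> \<mu>"
  shows "wsm \<rho> Sh X \<mu>' \<le> wsm \<rho> Sh X \<mu>"
  using assms huber_mono[of "\<mu>' / 2" "\<mu> / 2" "resid Sh X"] by (simp add: wsm_eq_huber)

lemma wsm_nonneg: "0 < \<rho> \<Longrightarrow> 0 < \<mu> \<Longrightarrow> 0 \<le> wsm \<rho> Sh X \<mu>"
  by (simp add: wsm_eq_huber huber_nonneg)

lemma bounded_on_stiefel:
  fixes f :: "real^'r^'d \<Rightarrow> real"
  assumes "continuous_on (stiefel :: (real^'r^'d) set) f"
  obtains c where "\<And>X. X \<in> stiefel \<Longrightarrow> \<bar>f X\<bar> \<le> c"
  using compact_imp_bounded[OF compact_continuous_image[OF assms compact_stiefel]]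
  unfolding bounded_iff by auto

locale smpg_problem =
  fixes u s :: "real^'r^'d \<Rightarrow> real"
    and Sh :: "real^'d^'d"
    and Ret :: "real^'r^'d \<Rightarrow> real^'r^'d \<Rightarrow> real^'r^'d"
    and \<rho> Lu Ls \<mu>0 :: real
  assumes u_diff: "\<forall>X. u differentiable (at X)"
    and u_lip: "Lu-lipschitz_on UNIV (egrad u)"
    and s_conv: "convex_on UNIV s"
    and s_lip: "Ls-lipschitz_on UNIV s"
    and \<rho>_pos: "0 < \<rho>"
    and ret: "retraction Ret"
    and \<mu>0_pos: "0 < \<mu>0"
begin

abbreviation grad_gsm :: "real \<Rightarrow> real^'r^'d \<Rightarrow> real^'r^'d" where
  "grad_gsm \<mu> X \<equiv> egrad (\<lambda>Y. gsm u \<rho> Sh Y \<mu>) X"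

definition grad_bound :: real where
  "grad_bound = norm (egrad u 0) + (Lu + 4 * \<rho> * norm Sh) * sqrt (real CARD('r))"

definition step_bound :: real where
  "step_bound = 2 * \<mu>0 * (grad_bound + Ls)"

definition retr_const :: real where
  "retr_const = (SOME M. M \<ge> 0 \<and> (\<forall>X\<in>stiefel. \<forall>D\<in>tangent X.
     norm D \<le> step_bound \<longrightarrow> norm (Ret X D - X - D) \<le> M * (norm D)\<^sup>2))"

definition curv0 :: real where
  "curv0 = Lu + 2 * \<rho> * norm Sh"

definition curv1 :: real where
  "curv1 = 16 * \<rho> * real CARD('r) * (norm Sh)\<^sup>2"

definition armijo_step :: real where
  "armijo_step = 1 / (4 * (\<mu>0 * (grad_bound + Ls) * retr_const
     + (\<mu>0 * curv0 + curv1) * (1 + retr_const * step_bound)\<^sup>2 + 1))"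

lemma Lu_nonneg: "0 \<le> Lu"
  using u_lip lipschitz_on_nonneg by blast

lemma Ls_nonneg: "0 \<le> Ls"
  using s_lip lipschitz_on_nonneg by blast

lemma s_lipschitz: "\<bar>s X - s Y\<bar> \<le> Ls * norm (X - Y)"
  using lipschitz_onD[OF s_lip, of X Y] by (simp add: dist_norm dist_real_def)

lemma grad_bound_nonneg: "0 \<le> grad_bound"
  using Lu_nonneg \<rho>_pos by (simp add: grad_bound_def)

lemma step_bound_nonneg: "0 \<le> step_bound"
  using grad_bound_nonneg Ls_nonneg \<mu>0_pos by (simp add: step_bound_def)

lemma retr_const_spec:
  shows retr_const_nonneg: "0 \<le> retr_const"
    and retr_remainder_le: "\<And>X D. X \<in> stiefel \<Longrightarrow> D \<in> tangent X \<Longrightarrow> norm D \<le> step_bound \<Longrightarrow>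
      norm (Ret X D - X - D) \<le> retr_const * (norm D)\<^sup>2"
  using someI_ex[OF retraction_second_order_bound[OF ret, of step_bound]]
  unfolding retr_const_def[symmetric] by auto

lemma curv_nonneg: "0 \<le> curv0" "0 \<le> curv1"
  using Lu_nonneg \<rho>_pos by (simp_all add: curv0_def curv1_def)

lemma armijo_step_pos: "0 < armijo_step" "armijo_step \<le> 1"
proof -
  have "0 \<le> \<mu>0 * (grad_bound + Ls) * retr_const + (\<mu>0 * curv0 + curv1) * (1 + retr_const * step_bound)\<^sup>2"
    using \<mu>0_pos grad_bound_nonneg Ls_nonneg retr_const_nonneg curv_nonneg
    by (intro add_nonneg_nonneg mult_nonneg_nonneg) auto
  then show "0 < armijo_step" "armijo_step \<le> 1"
    by (auto simp: armijo_step_def field_simps)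
qed

lemma has_derivative_gsm:
  assumes "0 < \<mu>"
  shows "((\<lambda>Y. gsm u \<rho> Sh Y \<mu>) has_derivative
      (\<lambda>H. (egrad u X + egrad (\<lambda>Y. wsm \<rho> Sh Y \<mu>) X) \<bullet> H)) (at X)"
  using has_derivative_add[OF differentiable_has_derivative_egrad[of u X] egrad_wsm(1)[OF \<rho>_pos assms, of Sh X]]
    u_diff
  by (simp add: gsm_def[abs_def] inner_add_left)

lemma egrad_gsm: "0 < \<mu> \<Longrightarrow> grad_gsm \<mu> X = egrad u X + egrad (\<lambda>Y. wsm \<rho> Sh Y \<mu>) X"
  by (rule egrad_eqI[OF has_derivative_gsm])

lemma norm_egrad_gsm_le:
  assumes "X \<in> stiefel" and "0 < \<mu>"
  shows "norm (grad_gsm \<mu> X) \<le> grad_bound"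
proof -
  have "norm (grad_gsm \<mu> X) \<le> norm (egrad u X) + norm (egrad (\<lambda>Y. wsm \<rho> Sh Y \<mu>) X)"
    unfolding egrad_gsm[OF assms(2)] by (rule norm_triangle_ineq)
  also have "\<dots> \<le> (norm (egrad u 0) + Lu * norm X) + 4 * \<rho> * norm X * norm Sh"
    by (intro add_mono norm_egrad_le[OF u_lip] norm_egrad_wsm_le \<rho>_pos assms(2))
  finally show ?thesis
    using assms(1) by (simp add: grad_bound_def norm_stiefel algebra_simps)
qed

lemma gsm_le_quadratic:
  assumes X: "X \<in> stiefel" and Y: "Y \<in> stiefel" and \<mu>: "0 < \<mu>"
  shows "gsm u \<rho> Sh Y \<mu> \<le> gsm u \<rho> Sh X \<mu> + grad_gsm \<mu> X \<bullet> (Y - X) + (curv0 + curv1 / \<mu>) * (norm (Y - X))\<^sup>2"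
proof -
  have "u Y \<le> u X + egrad u X \<bullet> (Y - X) + Lu * (norm (Y - X))\<^sup>2"
    using lipschitz_egrad_remainder[OF u_diff u_lip, of Y X] by linarith
  moreover have curv: "4 * \<rho> / \<mu> * ((norm X + norm Y) * norm Sh)\<^sup>2 = curv1 / \<mu>"
    using X Y by (simp add: norm_stiefel curv1_def power_mult_distrib)
  have "wsm \<rho> Sh Y \<mu> \<le> wsm \<rho> Sh X \<mu> + egrad (\<lambda>Y. wsm \<rho> Sh Y \<mu>) X \<bullet> (Y - X)
      + (2 * \<rho> * norm Sh + curv1 / \<mu>) * (norm (Y - X))\<^sup>2"
    using wsm_le_quadratic[OF \<rho>_pos \<mu>, of Sh Y X] by (simp only: curv)
  ultimately show ?thesis
    unfolding egrad_gsm[OF \<mu>] unfolding gsm_def curv0_def by (simp add: inner_add_left algebra_simps)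
qed

lemma fsm_mono:
  assumes "0 < \<mu>'" "\<mu>' \<le> \<mu>"
  shows "fsm u s \<rho> Sh X \<mu>' \<le> fsm u s \<rho> Sh X \<mu>"
  using wsm_mono[OF \<rho>_pos assms] by (simp add: fsm_def gsm_def)

lemma fsm_bounded: "\<exists>c\<ge>0. \<forall>X\<in>stiefel. \<forall>\<mu>. 0 < \<mu> \<longrightarrow> \<mu> \<le> \<mu>0 \<longrightarrow> \<bar>fsm u s \<rho> Sh X \<mu>\<bar> \<le> c"
proof -
  have u: "continuous_on stiefel u"
    using u_diff by (meson continuous_at_imp_continuous_on differentiable_imp_continuous_within)
  have s: "continuous_on stiefel s"
    using lipschitz_on_continuous_on[OF s_lip] by (rule continuous_on_subset) simp
  have w: "continuous_on stiefel (\<lambda>X. wsm \<rho> Sh X \<mu>0)"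
    by (intro continuous_at_imp_continuous_on ballI
        has_derivative_continuous[OF egrad_wsm(1)[OF \<rho>_pos \<mu>0_pos]])
  obtain c1 where c1: "\<And>X. X \<in> stiefel \<Longrightarrow> \<bar>u X + s X\<bar> \<le> c1"
    using bounded_on_stiefel[OF continuous_on_add[OF u s]] by blast
  obtain c2 where c2: "\<And>X. X \<in> stiefel \<Longrightarrow> \<bar>fsm u s \<rho> Sh X \<mu>0\<bar> \<le> c2"
    using bounded_on_stiefel[OF continuous_on_add[OF continuous_on_add[OF u w] s]]
    unfolding fsm_def gsm_def by blast
  have "\<bar>fsm u s \<rho> Sh X \<mu>\<bar> \<le> max (max c1 c2) 0" if "X \<in> stiefel" "0 < \<mu>" "\<mu> \<le> \<mu>0" for X \<mu>
  proof -
    have "u X + s X \<le> fsm u s \<rho> Sh X \<mu>"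
      using wsm_nonneg[OF \<rho>_pos \<open>0 < \<mu>\<close>] by (simp add: fsm_def gsm_def)
    moreover have "fsm u s \<rho> Sh X \<mu> \<le> fsm u s \<rho> Sh X \<mu>0"
      using fsm_mono that(2,3) .
    ultimately have "- c1 \<le> fsm u s \<rho> Sh X \<mu>" "fsm u s \<rho> Sh X \<mu> \<le> c2"
      using c1[OF that(1)] c2[OF that(1)] by (auto simp: abs_le_iff)
    then show ?thesis
      by (auto simp: abs_le_iff le_max_iff_disj)
  qed
  then show ?thesis
    by (intro exI[of _ "max (max c1 c2) 0"]) auto
qed


section \<open>The proximal subproblem\<close>

definition prox_solution :: "real^'r^'d \<Rightarrow> real \<Rightarrow> real^'r^'d \<Rightarrow> bool" where
  "prox_solution X \<mu> V \<longleftrightarrow> V \<in> tangent X \<and> (\<forall>W\<in>tangent X.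
     grad_gsm \<mu> X \<bullet> V + (norm V)\<^sup>2 / (2 * \<mu>) + s (X + V)
       \<le> grad_gsm \<mu> X \<bullet> W + (norm W)\<^sup>2 / (2 * \<mu>) + s (X + W))"

lemma prox_solution_decrease:
  assumes \<mu>: "0 < \<mu>" and V: "prox_solution X \<mu> V"
  shows "grad_gsm \<mu> X \<bullet> V + 3 / 4 * (norm V)\<^sup>2 / \<mu> + s (X + V) - s X \<le> 0"
proof -
  have "V \<in> tangent X"
    using V by (simp add: prox_solution_def)
  then have "(1/2) *\<^sub>R V \<in> tangent X"
    by (rule subspace_scale[OF subspace_tangent])
  with V have "grad_gsm \<mu> X \<bullet> V + (norm V)\<^sup>2 / (2 * \<mu>) + s (X + V)
      \<le> grad_gsm \<mu> X \<bullet> ((1/2) *\<^sub>R V) + (norm ((1/2) *\<^sub>R V))\<^sup>2 / (2 * \<mu>) + s (X + (1/2) *\<^sub>R V)"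
    unfolding prox_solution_def by blast
  then have "grad_gsm \<mu> X \<bullet> V + (norm V)\<^sup>2 / (2 * \<mu>) + s (X + V)
      \<le> grad_gsm \<mu> X \<bullet> V / 2 + (norm V)\<^sup>2 / (8 * \<mu>) + s (X + (1/2) *\<^sub>R V)"
    by (simp add: power2_eq_square)
  moreover have "s ((1 - 1/2) *\<^sub>R X + (1/2) *\<^sub>R (X + V)) \<le> (1 - 1/2) * s X + (1/2) * s (X + V)"
    by (rule convex_onD[OF s_conv]) auto
  moreover have "(1 - 1/2) *\<^sub>R X + (1/2) *\<^sub>R (X + V) = X + (1/2 :: real) *\<^sub>R V"
    by (simp add: scaleR_add_right algebra_simps scaleR_left_distrib[symmetric])
  moreover have "(norm V)\<^sup>2 / (2 * \<mu>) - (norm V)\<^sup>2 / (8 * \<mu>) = 3 / 8 * (norm V)\<^sup>2 / \<mu>"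
    using \<mu> by (simp add: field_simps)
  ultimately show ?thesis
    by simp
qed

lemma norm_prox_solution_le:
  assumes X: "X \<in> stiefel" and \<mu>: "0 < \<mu>" "\<mu> \<le> \<mu>0" and V: "prox_solution X \<mu> V"
  shows "norm V \<le> step_bound"
proof -
  have "- (grad_gsm \<mu> X \<bullet> V) \<le> norm (grad_gsm \<mu> X) * norm V"
    using Cauchy_Schwarz_ineq2[of "grad_gsm \<mu> X" V] by linarith
  also have "\<dots> \<le> grad_bound * norm V"
    by (rule mult_right_mono[OF norm_egrad_gsm_le[OF X \<mu>(1)]]) simp
  finally have "- (grad_gsm \<mu> X \<bullet> V) \<le> grad_bound * norm V" .
  moreover have "s X - s (X + V) \<le> Ls * norm V"
    using s_lipschitz[of X "X + V"] by simp
  ultimately have "3 / 4 * (norm V)\<^sup>2 / \<mu> \<le> (grad_bound + Ls) * norm V"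
    using prox_solution_decrease[OF \<mu>(1) V] by (simp add: algebra_simps)
  then have le: "norm V * (3 / 4 * norm V) \<le> norm V * (\<mu> * (grad_bound + Ls))"
    using \<mu> by (simp add: field_simps power2_eq_square)
  have "3 / 4 * norm V \<le> \<mu> * (grad_bound + Ls)"
  proof (cases "V = 0")
    case False
    then show ?thesis
      by (intro mult_left_le_imp_le[OF le]) simp
  qed (use \<mu> grad_bound_nonneg Ls_nonneg in simp)
  also have "\<dots> \<le> \<mu>0 * (grad_bound + Ls)"
    using \<mu> grad_bound_nonneg Ls_nonneg by (intro mult_right_mono) auto
  finally have "3 / 4 * norm V \<le> \<mu>0 * (grad_bound + Ls)" .
  moreover have "0 \<le> \<mu>0 * (grad_bound + Ls)"
    using \<mu>0_pos grad_bound_nonneg Ls_nonneg by simp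
  ultimately show ?thesis
    unfolding step_bound_def by linarith
qed

lemma prox_solution_variational:
  assumes \<mu>: "0 < \<mu>" and V: "prox_solution X \<mu> V" and W: "W \<in> tangent X"
  shows "0 \<le> s (X + V + W) - s (X + V) + (grad_gsm \<mu> X + (1 / \<mu>) *\<^sub>R V) \<bullet> W"
proof (rule nonneg_of_forall_add_mult_nonneg[where c = "(norm W)\<^sup>2 / (2 * \<mu>)"])
  fix t :: real assume t: "0 < t" "t \<le> 1"
  define a where "a = grad_gsm \<mu> X"
  define Z where "Z = X + V"
  have "V \<in> tangent X"
    using V by (simp add: prox_solution_def)
  then have "V + t *\<^sub>R W \<in> tangent X"
    by (intro subspace_add[OF subspace_tangent] subspace_scale[OF subspace_tangent] W)
  with V have opt: "a \<bullet> V + (norm V)\<^sup>2 / (2 * \<mu>) + s Z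
      \<le> a \<bullet> (V + t *\<^sub>R W) + (norm (V + t *\<^sub>R W))\<^sup>2 / (2 * \<mu>) + s (Z + t *\<^sub>R W)"
    by (auto simp: prox_solution_def a_def Z_def add.assoc)
  have "s ((1 - t) *\<^sub>R Z + t *\<^sub>R (Z + W)) \<le> (1 - t) * s Z + t * s (Z + W)"
    using t by (intro convex_onD[OF s_conv]) auto
  moreover have "(1 - t) *\<^sub>R Z + t *\<^sub>R (Z + W) = Z + t *\<^sub>R W"
    by (simp add: algebra_simps)
  ultimately have conv: "s (Z + t *\<^sub>R W) \<le> (1 - t) * s Z + t * s (Z + W)"
    by simp
  have "(norm (V + t *\<^sub>R W))\<^sup>2 = (norm V)\<^sup>2 + 2 * t * (V \<bullet> W) + t\<^sup>2 * (norm W)\<^sup>2"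
    unfolding power2_norm_eq_inner
    by (simp add: inner_add_left inner_add_right inner_commute[of W V] power2_eq_square algebra_simps)
  then have "(norm (V + t *\<^sub>R W))\<^sup>2 / (2 * \<mu>)
      = (norm V)\<^sup>2 / (2 * \<mu>) + (2 * t * (V \<bullet> W) + t\<^sup>2 * (norm W)\<^sup>2) / (2 * \<mu>)"
    by (simp add: add_divide_distrib)
  with opt conv have "0 \<le> t * (a \<bullet> W) + (2 * t * (V \<bullet> W) + t\<^sup>2 * (norm W)\<^sup>2) / (2 * \<mu>)
      + t * (s (Z + W) - s Z)"
    by (simp add: inner_add_right algebra_simps)
  also have "\<dots> = t * (s (Z + W) - s Z + (a + (1 / \<mu>) *\<^sub>R V) \<bullet> W + t * ((norm W)\<^sup>2 / (2 * \<mu>)))"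
    using \<mu> by (simp add: inner_add_left field_simps power2_eq_square)
  finally show "0 \<le> s (X + V + W) - s (X + V) + (grad_gsm \<mu> X + (1 / \<mu>) *\<^sub>R V) \<bullet> W
      + t * ((norm W)\<^sup>2 / (2 * \<mu>))"
    using t by (simp add: a_def Z_def zero_le_mult_iff)
qed

text \<open>By \<open>prox_solution_variational\<close>, \<open>W \<mapsto> s (X + V + W) - s (X + V) + c \<bullet> W\<close> with
  \<open>c = grad_gsm \<mu> X + V / \<mu>\<close> is nonnegative on the tangent space; a subgradient of it at \<open>0\<close>
  that is normal to the tangent space yields the certificate.\<close>

lemma prox_solution_stationary:
  assumes X: "X \<in> stiefel" and \<mu>: "0 < \<mu>" and V: "prox_solution X \<mu> V"
  shows "\<exists>G\<in>subdiff s (X + V). rgrad u X + rgrad (\<lambda>Y. wsm \<rho> Sh Y \<mu>) X + proj_tan X G = - (1 / \<mu>) *\<^sub>R V"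
proof -
  define c where "c = grad_gsm \<mu> X + (1 / \<mu>) *\<^sub>R V"
  define \<sigma> where "\<sigma> W = s (X + V + W) - s (X + V) + c \<bullet> W" for W
  have "convex_on UNIV \<sigma>"
  proof (rule convex_onI)
    fix t :: real and x y :: "real^'r^'d" assume t: "0 < t" "t < 1"
    have "s ((1 - t) *\<^sub>R (X + V + x) + t *\<^sub>R (X + V + y)) \<le> (1 - t) * s (X + V + x) + t * s (X + V + y)"
      using t by (intro convex_onD[OF s_conv]) auto
    moreover have "(1 - t) *\<^sub>R (X + V + x) + t *\<^sub>R (X + V + y) = X + V + ((1 - t) *\<^sub>R x + t *\<^sub>R y)"
      by (simp add: algebra_simps)
    ultimately show "\<sigma> ((1 - t) *\<^sub>R x + t *\<^sub>R y) \<le> (1 - t) * \<sigma> x + t * \<sigma> y"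
      by (simp add: \<sigma>_def inner_add_right algebra_simps)
  qed simp
  moreover have "\<sigma> W \<ge> 0" if "W \<in> tangent X" for W
    using prox_solution_variational[OF \<mu> V that] by (simp add: \<sigma>_def c_def)
  ultimately obtain g where g: "\<forall>W. g \<bullet> W \<le> \<sigma> W" and g_normal: "\<forall>W\<in>tangent X. g \<bullet> W = 0"
    using convex_nonneg_on_subspace_subgradient[OF _ _ subspace_tangent] by (fastforce simp: \<sigma>_def)
  have "g - c \<in> subdiff s (X + V)"
    unfolding subdiff_def
  proof (clarify)
    fix Y
    show "s (X + V) + (g - c) \<bullet> (Y - (X + V)) \<le> s Y"
      using g[rule_format, of "Y - (X + V)"] by (simp add: \<sigma>_def inner_diff_left)
  qed
  moreover have "rgrad u X + rgrad (\<lambda>Y. wsm \<rho> Sh Y \<mu>) X + proj_tan X (g - c) = - (1 / \<mu>) *\<^sub>R V"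
  proof -
    note lin = linear_proj_tan[of X]
    have "proj_tan X V = V"
      using V by (simp add: prox_solution_def proj_tan_tangent)
    then show ?thesis
      unfolding rgrad_def c_def egrad_gsm[OF \<mu>] linear_diff[OF lin] linear_add[OF lin]
        linear_scale[OF lin] proj_tan_eq_0[OF X g_normal]
      by simp
  qed
  ultimately show ?thesis
    by blast
qed


section \<open>Sufficient decrease along the retraction\<close>

lemma retraction_step:
  assumes X: "X \<in> stiefel" and V: "V \<in> tangent X" and VB: "norm V \<le> step_bound"
    and t: "0 \<le> t" "t \<le> 1"
  shows "Ret X (t *\<^sub>R V) \<in> stiefel"
    and "norm (Ret X (t *\<^sub>R V) - X - t *\<^sub>R V) \<le> retr_const * (t * norm V)\<^sup>2"
    and "norm (Ret X (t *\<^sub>R V) - X) \<le> (1 + retr_const * step_bound) * (t * norm V)"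
proof -
  have D: "t *\<^sub>R V \<in> tangent X"
    by (rule subspace_scale[OF subspace_tangent V])
  have "t * norm V \<le> norm V"
    using t by (simp add: mult_left_le_one_le)
  then have tV: "t * norm V \<le> step_bound"
    using VB by linarith
  then have "norm (t *\<^sub>R V) \<le> step_bound"
    using t by simp
  from retr_remainder_le[OF X D this]
  show R: "norm (Ret X (t *\<^sub>R V) - X - t *\<^sub>R V) \<le> retr_const * (t * norm V)\<^sup>2"
    using t by simp
  show "Ret X (t *\<^sub>R V) \<in> stiefel"
    using ret X D unfolding retraction_def by blast
  have "norm (Ret X (t *\<^sub>R V) - X) \<le> norm (t *\<^sub>R V) + norm (Ret X (t *\<^sub>R V) - X - t *\<^sub>R V)"
    using norm_triangle_sub[of "Ret X (t *\<^sub>R V) - X" "t *\<^sub>R V"] by simp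
  also have "\<dots> \<le> t * norm V + retr_const * (t * norm V) * step_bound"
    using R tV t retr_const_nonneg mult_left_mono[OF tV, of "retr_const * (t * norm V)"]
    by (simp add: power2_eq_square mult.assoc)
  finally show "norm (Ret X (t *\<^sub>R V) - X) \<le> (1 + retr_const * step_bound) * (t * norm V)"
    by (simp add: algebra_simps)
qed

lemma s_le_convex_combination:
  assumes "0 \<le> t" "t \<le> 1"
  shows "s Y \<le> (1 - t) * s X + t * s (X + V) + Ls * norm (Y - X - t *\<^sub>R V)"
proof -
  have "s ((1 - t) *\<^sub>R X + t *\<^sub>R (X + V)) \<le> (1 - t) * s X + t * s (X + V)"
    using assms by (intro convex_onD[OF s_conv]) auto
  moreover have "(1 - t) *\<^sub>R X + t *\<^sub>R (X + V) = X + t *\<^sub>R V"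
    by (simp add: algebra_simps)
  moreover have "s Y - s (X + t *\<^sub>R V) \<le> Ls * norm (Y - X - t *\<^sub>R V)"
    using s_lipschitz[of Y "X + t *\<^sub>R V"] by (simp add: algebra_simps)
  ultimately show ?thesis
    by simp
qed

lemma fsm_retraction_step_le:
  assumes X: "X \<in> stiefel" and \<mu>: "0 < \<mu>" "\<mu> \<le> \<mu>0" and V: "prox_solution X \<mu> V"
    and t: "0 < t" "t \<le> 1"
  shows "fsm u s \<rho> Sh (Ret X (t *\<^sub>R V)) \<mu> \<le> fsm u s \<rho> Sh X \<mu> + t * (grad_gsm \<mu> X \<bullet> V + s (X + V) - s X)
      + ((grad_bound + Ls) * retr_const + (curv0 + curv1 / \<mu>) * (1 + retr_const * step_bound)\<^sup>2)
        * (t * norm V)\<^sup>2"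
proof -
  define Y where "Y = Ret X (t *\<^sub>R V)"
  define R where "R = Y - X - t *\<^sub>R V"
  define n where "n = t * norm V"
  define a where "a = grad_gsm \<mu> X"
  have VT: "V \<in> tangent X"
    using V by (simp add: prox_solution_def)
  note step = retraction_step[OF X VT norm_prox_solution_le[OF X \<mu> V] less_imp_le[OF t(1)] t(2),
      folded Y_def R_def n_def]
  have "n \<ge> 0"
    using t by (simp add: n_def)
  have "(curv0 + curv1 / \<mu>) * (norm (Y - X))\<^sup>2 \<le> (curv0 + curv1 / \<mu>) * ((1 + retr_const * step_bound)\<^sup>2 * n\<^sup>2)"
    using power_mono[OF step(3) norm_ge_zero, of 2] curv_nonneg \<mu>
    by (intro mult_left_mono) (auto simp: power_mult_distrib)
  with gsm_le_quadratic[OF X step(1) \<mu>(1)]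
  have g: "gsm u \<rho> Sh Y \<mu> \<le> gsm u \<rho> Sh X \<mu> + a \<bullet> (Y - X)
      + (curv0 + curv1 / \<mu>) * ((1 + retr_const * step_bound)\<^sup>2 * n\<^sup>2)"
    unfolding a_def by linarith
  have "a \<bullet> R \<le> norm a * norm R"
    by (rule norm_cauchy_schwarz)
  also have "\<dots> \<le> grad_bound * (retr_const * n\<^sup>2)"
    using norm_egrad_gsm_le[OF X \<mu>(1)] step(2) grad_bound_nonneg
    by (intro mult_mono) (auto simp: a_def R_def)
  finally have "a \<bullet> (Y - X) \<le> t * (a \<bullet> V) + grad_bound * retr_const * n\<^sup>2"
    by (simp add: R_def inner_diff_right algebra_simps)
  moreover have "Ls * norm R \<le> Ls * (retr_const * n\<^sup>2)"
    using step(2) Ls_nonneg by (intro mult_left_mono) (auto simp: R_def)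
  with s_le_convex_combination[of t Y X V] t
  have "s Y \<le> (1 - t) * s X + t * s (X + V) + Ls * (retr_const * n\<^sup>2)"
    unfolding R_def by linarith
  ultimately show ?thesis
    using g unfolding Y_def[symmetric] a_def[symmetric] n_def[symmetric]
    by (simp add: fsm_def algebra_simps)
qed

lemma armijo_condition:
  assumes X: "X \<in> stiefel" and \<mu>: "0 < \<mu>" "\<mu> \<le> \<mu>0" and V: "prox_solution X \<mu> V"
    and t: "0 < t" "t \<le> armijo_step"
  shows "fsm u s \<rho> Sh (Ret X (t *\<^sub>R V)) \<mu> \<le> fsm u s \<rho> Sh X \<mu> - t / (2 * \<mu>) * (norm V)\<^sup>2"
proof -
  define Q where "Q = (grad_bound + Ls) * retr_const + (curv0 + curv1 / \<mu>) * (1 + retr_const * step_bound)\<^sup>2"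
  define P where "P = \<mu>0 * (grad_bound + Ls) * retr_const + (\<mu>0 * curv0 + curv1) * (1 + retr_const * step_bound)\<^sup>2"
  note nonneg = grad_bound_nonneg Ls_nonneg retr_const_nonneg curv_nonneg step_bound_nonneg
  have "0 \<le> Q" "0 \<le> P"
    unfolding Q_def P_def using \<mu> \<mu>0_pos nonneg by (auto intro!: add_nonneg_nonneg mult_nonneg_nonneg)
  have "\<mu> * Q = \<mu> * (grad_bound + Ls) * retr_const + (\<mu> * curv0 + curv1) * (1 + retr_const * step_bound)\<^sup>2"
    using \<mu> by (simp add: Q_def field_simps)
  also have "\<dots> \<le> P"
    unfolding P_def using \<mu> nonneg by (intro add_mono mult_right_mono mult_left_mono) auto
  finally have "t * (\<mu> * Q) \<le> armijo_step * P"
    using t \<open>0 \<le> Q\<close> \<mu> \<open>0 \<le> P\<close> by (intro mult_mono) auto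
  also have "\<dots> = P / (4 * (P + 1))"
    by (simp add: armijo_step_def P_def)
  also have "\<dots> \<le> 1 / 4"
    using \<open>0 \<le> P\<close> by (simp add: field_simps)
  finally have tQ: "t * (\<mu> * Q) \<le> 1 / 4" .
  have "(t * norm V)\<^sup>2 * Q = (t * (norm V)\<^sup>2) * (t * (\<mu> * Q)) / \<mu>"
    using \<mu> by (simp add: power2_eq_square field_simps)
  also have "\<dots> \<le> (t * (norm V)\<^sup>2) * (1 / 4) / \<mu>"
    using tQ t \<mu> by (intro divide_right_mono mult_left_mono) auto
  finally have "Q * (t * norm V)\<^sup>2 \<le> t * (norm V)\<^sup>2 / (4 * \<mu>)"
    by (simp add: mult.commute)
  moreover have "t * (grad_gsm \<mu> X \<bullet> V + s (X + V) - s X) \<le> t * (- (3 / 4 * (norm V)\<^sup>2 / \<mu>))"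
    using prox_solution_decrease[OF \<mu>(1) V] t by (intro mult_left_mono) auto
  moreover have "t \<le> 1"
    using t armijo_step_pos by linarith
  ultimately have "fsm u s \<rho> Sh (Ret X (t *\<^sub>R V)) \<mu>
      \<le> fsm u s \<rho> Sh X \<mu> + t * (- (3 / 4 * (norm V)\<^sup>2 / \<mu>)) + t * (norm V)\<^sup>2 / (4 * \<mu>)"
    using fsm_retraction_step_le[OF X \<mu> V t(1)] unfolding Q_def[symmetric] by linarith
  also have "\<dots> = fsm u s \<rho> Sh X \<mu> - t / (2 * \<mu>) * (norm V)\<^sup>2"
    using \<mu> by (simp add: field_simps)
  finally show ?thesis .
qed


context
  fixes \<theta> \<beta> :: real and X V :: "nat \<Rightarrow> real^'r^'d" and \<mu> \<alpha> :: "nat \<Rightarrow> real"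
  assumes \<theta>: "0 < \<theta>" "\<theta> < 1" and \<beta>: "0 < \<beta>" "\<beta> < 1"
    and run: "smpg_run u s \<rho> Sh Ret \<mu>0 \<theta> \<beta> X V \<mu> \<alpha>"
begin

lemma smpg_run_0: "X 0 \<in> stiefel" "\<mu> 0 = \<mu>0"
  using run by (simp_all add: smpg_run_def)

lemma smpg_run_prox: "prox_solution (X k) (\<mu> k) (V k)"
  using run unfolding smpg_run_def prox_solution_def by blast

lemma smpg_run_Suc:
  "X (Suc k) = Ret (X k) (\<alpha> k *\<^sub>R V k)"
  "\<mu> (Suc k) = (if norm (V k) > (\<mu> k)\<^sup>2 then \<mu> k else \<theta> * \<mu> k)"
  using run unfolding smpg_run_def by blast+

lemma smpg_run_linesearch:
  obtains m where "\<alpha> k = \<beta> ^ m"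
    and "fsm u s \<rho> Sh (Ret (X k) (\<beta> ^ m *\<^sub>R V k)) (\<mu> k)
      \<le> fsm u s \<rho> Sh (X k) (\<mu> k) - \<beta> ^ m / (2 * \<mu> k) * (norm (V k))\<^sup>2"
    and "\<And>m'. m' < m \<Longrightarrow> \<not> fsm u s \<rho> Sh (Ret (X k) (\<beta> ^ m' *\<^sub>R V k)) (\<mu> k)
      \<le> fsm u s \<rho> Sh (X k) (\<mu> k) - \<beta> ^ m' / (2 * \<mu> k) * (norm (V k))\<^sup>2"
  using run unfolding smpg_run_def by blast

lemma smpg_run_mu: "0 < \<mu> k \<and> \<mu> k \<le> \<mu>0"
proof (induction k)
  case (Suc k)
  moreover have "\<theta> * \<mu> k \<le> \<mu> k" "0 < \<theta> * \<mu> k"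
    using \<theta> Suc by (simp_all add: mult_left_le_one_le)
  ultimately show ?case
    by (auto simp: smpg_run_Suc)
qed (use smpg_run_0 \<mu>0_pos in simp)

lemma smpg_run_stiefel: "X k \<in> stiefel"
proof (induction k)
  case (Suc k)
  have "\<alpha> k *\<^sub>R V k \<in> tangent (X k)"
    using smpg_run_prox[of k] subspace_scale[OF subspace_tangent] by (auto simp: prox_solution_def)
  with Suc ret show ?case
    by (simp add: smpg_run_Suc retraction_def)
qed (simp add: smpg_run_0)

lemma smpg_run_step_size: "\<beta> * armijo_step \<le> \<alpha> k"
proof -
  obtain m where m: "\<alpha> k = \<beta> ^ m"
    and first: "\<And>m'. m' < m \<Longrightarrow> \<not> fsm u s \<rho> Sh (Ret (X k) (\<beta> ^ m' *\<^sub>R V k)) (\<mu> k)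
      \<le> fsm u s \<rho> Sh (X k) (\<mu> k) - \<beta> ^ m' / (2 * \<mu> k) * (norm (V k))\<^sup>2"
    using smpg_run_linesearch[of k] by blast
  show ?thesis
  proof (cases m)
    case 0
    then show ?thesis
      using m \<beta> armijo_step_pos by (simp add: mult_le_one)
  next
    case (Suc m')
    have "armijo_step < \<beta> ^ m'"
    proof (rule ccontr)
      assume "\<not> armijo_step < \<beta> ^ m'"
      then have "fsm u s \<rho> Sh (Ret (X k) (\<beta> ^ m' *\<^sub>R V k)) (\<mu> k)
          \<le> fsm u s \<rho> Sh (X k) (\<mu> k) - \<beta> ^ m' / (2 * \<mu> k) * (norm (V k))\<^sup>2"
        using \<beta> smpg_run_mu[of k]
        by (intro armijo_condition[OF smpg_run_stiefel _ _ smpg_run_prox]) auto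
      with first[of m'] Suc show False
        by simp
    qed
    with m Suc \<beta> show ?thesis
      by simp
  qed
qed

lemma smpg_run_descent:
  "fsm u s \<rho> Sh (X (Suc k)) (\<mu> (Suc k)) \<le> fsm u s \<rho> Sh (X k) (\<mu> k) - \<alpha> k / (2 * \<mu> k) * (norm (V k))\<^sup>2"
proof -
  obtain m where "\<alpha> k = \<beta> ^ m"
    and "fsm u s \<rho> Sh (Ret (X k) (\<beta> ^ m *\<^sub>R V k)) (\<mu> k)
      \<le> fsm u s \<rho> Sh (X k) (\<mu> k) - \<beta> ^ m / (2 * \<mu> k) * (norm (V k))\<^sup>2"
    using smpg_run_linesearch[of k] by blast
  moreover have "\<mu> (Suc k) \<le> \<mu> k"
    using \<theta> smpg_run_mu[of k] by (simp add: smpg_run_Suc mult_left_le_one_le)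
  then have "fsm u s \<rho> Sh (X (Suc k)) (\<mu> (Suc k)) \<le> fsm u s \<rho> Sh (X (Suc k)) (\<mu> k)"
    using smpg_run_mu[of "Suc k"] by (intro fsm_mono) auto
  ultimately show ?thesis
    by (simp add: smpg_run_Suc)
qed

lemma smpg_run_merit_mono:
  "fsm u s \<rho> Sh (X (Suc k)) (\<mu> (Suc k)) \<le> fsm u s \<rho> Sh (X k) (\<mu> k)"
proof -
  have "0 \<le> \<alpha> k"
    using smpg_run_step_size[of k] \<beta> armijo_step_pos by (smt (verit) mult_pos_pos)
  then have "0 \<le> \<alpha> k / (2 * \<mu> k) * (norm (V k))\<^sup>2"
    using smpg_run_mu[of k] by simp
  with smpg_run_descent[of k] show ?thesis
    by linarith
qed

lemma smpg_run_slow_step: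
  assumes "(\<mu> k)\<^sup>2 < norm (V k)"
  shows "fsm u s \<rho> Sh (X (Suc k)) (\<mu> (Suc k)) \<le> fsm u s \<rho> Sh (X k) (\<mu> k) - \<beta> * armijo_step / 2 * (\<mu> k)^3"
proof -
  have \<mu>: "0 < \<mu> k"
    using smpg_run_mu by blast
  have "((\<mu> k)\<^sup>2)\<^sup>2 \<le> (norm (V k))\<^sup>2"
    using assms by (intro power_mono) auto
  moreover have "\<beta> * armijo_step / (2 * \<mu> k) \<le> \<alpha> k / (2 * \<mu> k)"
    using smpg_run_step_size[of k] \<mu> by (simp add: divide_right_mono)
  moreover have "0 \<le> \<beta> * armijo_step / (2 * \<mu> k)"
    using \<beta> armijo_step_pos \<mu> by simp
  ultimately have "\<beta> * armijo_step / (2 * \<mu> k) * (\<mu> k)^4 \<le> \<alpha> k / (2 * \<mu> k) * (norm (V k))\<^sup>2"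
    by (intro mult_mono) auto
  moreover have "\<beta> * armijo_step / (2 * \<mu> k) * (\<mu> k)^4 = \<beta> * armijo_step / 2 * (\<mu> k)^3"
    using \<mu> by (simp add: field_simps power_def)
  ultimately show ?thesis
    using smpg_run_descent[of k] by linarith
qed

lemma smpg_run_certificate:
  assumes small: "norm (V k) \<le> (\<mu> k)\<^sup>2" and "\<mu> k \<le> \<epsilon>" and "\<epsilon> \<le> 1"
  shows "norm (V k) \<le> \<epsilon>\<^sup>2" and "eps_stat_cert u s \<rho> Sh \<epsilon> (X k) (V k) (\<mu> k)"
proof -
  have \<mu>: "0 < \<mu> k"
    using smpg_run_mu by blast
  then have "(\<mu> k)\<^sup>2 \<le> \<epsilon>\<^sup>2"
    using \<open>\<mu> k \<le> \<epsilon>\<close> by (intro power_mono) auto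
  with small show "norm (V k) \<le> \<epsilon>\<^sup>2"
    by linarith
  moreover have "\<epsilon>\<^sup>2 \<le> \<epsilon>"
    using \<mu> \<open>\<mu> k \<le> \<epsilon>\<close> \<open>\<epsilon> \<le> 1\<close> by (simp add: power2_eq_square mult_left_le_one_le)
  moreover have "infdist 0 {rgrad u (X k) + rgrad (\<lambda>Y. wsm \<rho> Sh Y (\<mu> k)) (X k) + proj_tan (X k) G | G.
      G \<in> subdiff s (X k + V k)} \<le> \<epsilon>"
  proof -
    obtain G where G_sub: "G \<in> subdiff s (X k + V k)" and G:
      "rgrad u (X k) + rgrad (\<lambda>Y. wsm \<rho> Sh Y (\<mu> k)) (X k) + proj_tan (X k) G = - (1 / \<mu> k) *\<^sub>R V k"
      using prox_solution_stationary[OF smpg_run_stiefel \<mu> smpg_run_prox] by blast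
    then have "infdist 0 {rgrad u (X k) + rgrad (\<lambda>Y. wsm \<rho> Sh Y (\<mu> k)) (X k) + proj_tan (X k) G | G.
        G \<in> subdiff s (X k + V k)} \<le> dist 0 (- (1 / \<mu> k) *\<^sub>R V k)"
      by (intro infdist_le) (auto intro!: exI[of _ G])
    also have "\<dots> = norm (V k) / \<mu> k"
      using \<mu> by simp
    also have "\<dots> \<le> (\<mu> k)\<^sup>2 / \<mu> k"
      using small \<mu> by (intro divide_right_mono) auto
    also have "\<dots> \<le> \<epsilon>"
      using \<mu> \<open>\<mu> k \<le> \<epsilon>\<close> by (simp add: power2_eq_square)
    finally show ?thesis .
  qed
  moreover have "V k \<in> tangent (X k)"
    using smpg_run_prox[of k] by (simp add: prox_solution_def)
  ultimately show "eps_stat_cert u s \<rho> Sh \<epsilon> (X k) (V k) (\<mu> k)"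
    unfolding eps_stat_cert_def using \<mu> \<open>\<mu> k \<le> \<epsilon>\<close> by linarith
qed

lemma smpg_run_iteration_bound:
  assumes bound: "\<forall>Y\<in>stiefel. \<forall>\<nu>. 0 < \<nu> \<longrightarrow> \<nu> \<le> \<mu>0 \<longrightarrow> \<bar>fsm u s \<rho> Sh Y \<nu>\<bar> \<le> c"
    and \<epsilon>: "0 < \<epsilon>" "\<epsilon> < 1" "\<epsilon> \<le> \<mu>0"
  shows "\<exists>k. norm (V k) \<le> (\<mu> k)\<^sup>2 \<and>
    real k \<le> (\<mu>0 / (1 - \<theta>) + 4 * c / (\<beta> * armijo_step * \<theta>^3) + 1) * \<epsilon> powr -3 \<and> \<mu> k \<le> \<epsilon>"
proof -
  define F where "F k = fsm u s \<rho> Sh (X k) (\<mu> k)" for k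
  have "\<bar>F k\<bar> \<le> c" for k
    using bound smpg_run_stiefel[of k] smpg_run_mu[of k] unfolding F_def by blast
  then have bounds: "- c \<le> F k" "F 0 \<le> c" for k
    by (metis abs_le_D2 minus_le_iff, metis abs_le_D1)
  have \<mu>_Suc: "\<mu> (Suc k) = (if norm (V k) \<le> (\<mu> k)\<^sup>2 then \<theta> * \<mu> k else \<mu> k)" for k
    by (simp add: smpg_run_Suc not_less)
  have mono: "F (Suc k) \<le> F k" for k
    unfolding F_def by (rule smpg_run_merit_mono)
  have slow: "F (Suc k) \<le> F k - \<beta> * armijo_step / 2 * (\<mu> k)^3" if "\<not> norm (V k) \<le> (\<mu> k)\<^sup>2" for k
    unfolding F_def using that by (intro smpg_run_slow_step) (simp add: not_le)
  have "0 < \<beta> * armijo_step / 2"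
    using \<beta> armijo_step_pos by simp
  from adaptive_smoothing_iteration_bound[OF \<theta> this smpg_run_0(2) \<mu>_Suc mono slow bounds \<epsilon>]
  have "\<exists>k. norm (V k) \<le> (\<mu> k)\<^sup>2 \<and>
      real k \<le> (\<mu>0 / (1 - \<theta>) + (c - - c) / (\<beta> * armijo_step / 2 * \<theta>^3) + 1) * \<epsilon> powr -3 \<and> \<mu> k \<le> \<epsilon>" .
  moreover have "(c - - c) / (\<beta> * armijo_step / 2 * \<theta>^3) = 4 * c / (\<beta> * armijo_step * \<theta>^3)"
    by (simp add: field_simps)
  ultimately show ?thesis
    by simp
qed

end

end

theorem mainTheorem13:
  fixes u s :: "real^'r^'d \<Rightarrow> real"
    and Sh :: "real^'d^'d"
    and Ret :: "real^'r^'d \<Rightarrow> real^'r^'d \<Rightarrow> real^'r^'d"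
    and \<rho> Lu Ls \<mu>0 \<theta> \<beta> :: real
  assumes rd: "1 \<le> CARD('r)" "CARD('r) < CARD('d)"
    and u_diff: "\<forall>X. u differentiable (at X)"
    and u_lip: "Lu-lipschitz_on UNIV (egrad u)"
    and s_conv: "convex_on UNIV s"
    and s_lip: "Ls-lipschitz_on UNIV s"
    and Sh_sym: "transpose Sh = Sh"
    and Sh_psd: "\<forall>x. 0 \<le> x \<bullet> (Sh *v x)"
    and \<rho>_pos: "0 < \<rho>"
    and ret: "retraction Ret"
    and \<mu>0_pos: "0 < \<mu>0"
    and \<theta>: "0 < \<theta>" "\<theta> < 1"
    and \<beta>: "0 < \<beta>" "\<beta> < 1"
  shows "\<exists>C>0. \<forall>X V \<mu> \<alpha>. smpg_run u s \<rho> Sh Ret \<mu>0 \<theta> \<beta> X V \<mu> \<alpha> \<longrightarrow>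
           (\<forall>\<epsilon>. 0 < \<epsilon> \<and> \<epsilon> < 1 \<and> \<epsilon> \<le> \<mu>0 \<longrightarrow>
              (\<exists>k. norm (V k) \<le> (\<mu> k)\<^sup>2 \<and> real k \<le> C * \<epsilon> powr (-3) \<and> \<mu> k \<le> \<epsilon>) \<and>
              (\<forall>k. norm (V k) \<le> (\<mu> k)\<^sup>2 \<and> \<mu> k \<le> \<epsilon> \<longrightarrow>
                 norm (V k) \<le> \<epsilon>\<^sup>2 \<and> eps_stat_cert u s \<rho> Sh \<epsilon> (X k) (V k) (\<mu> k) \<and>
                 eps_stationary u s \<rho> Sh \<epsilon> (X k)))"
proof -
  interpret smpg_problem u s Sh Ret \<rho> Lu Ls \<mu>0
    by unfold_locales (use u_diff u_lip s_conv s_lip \<rho>_pos ret \<mu>0_pos in auto)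
  obtain c where "c \<ge> 0" and bound: "\<forall>X\<in>stiefel. \<forall>\<mu>. 0 < \<mu> \<longrightarrow> \<mu> \<le> \<mu>0 \<longrightarrow> \<bar>fsm u s \<rho> Sh X \<mu>\<bar> \<le> c"
    using fsm_bounded by blast
  define C where "C = \<mu>0 / (1 - \<theta>) + 4 * c / (\<beta> * armijo_step * \<theta>^3) + 1"
  have "C > 0"
    using \<open>c \<ge> 0\<close> \<mu>0_pos \<theta> \<beta> armijo_step_pos by (simp add: C_def add_nonneg_pos)
  have "(\<exists>k. norm (V k) \<le> (\<mu> k)\<^sup>2 \<and> real k \<le> C * \<epsilon> powr (-3) \<and> \<mu> k \<le> \<epsilon>) \<and>
      (\<forall>k. norm (V k) \<le> (\<mu> k)\<^sup>2 \<and> \<mu> k \<le> \<epsilon> \<longrightarrow>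
        norm (V k) \<le> \<epsilon>\<^sup>2 \<and> eps_stat_cert u s \<rho> Sh \<epsilon> (X k) (V k) (\<mu> k) \<and> eps_stationary u s \<rho> Sh \<epsilon> (X k))"
    if run: "smpg_run u s \<rho> Sh Ret \<mu>0 \<theta> \<beta> X V \<mu> \<alpha>" and \<epsilon>: "0 < \<epsilon>" "\<epsilon> < 1" "\<epsilon> \<le> \<mu>0"
    for X V \<mu> \<alpha> \<epsilon>
    using smpg_run_iteration_bound[OF \<theta> \<beta> run bound \<epsilon>] smpg_run_certificate[OF \<theta> \<beta> run]
      smpg_run_stiefel[OF \<theta> \<beta> run] \<epsilon>
    unfolding C_def eps_stationary_def by fastforce
  with \<open>C > 0\<close> show ?thesis
    by blast
qed

end
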